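(* For the LPE-BC with COF with $K\ge 2$ users and $Q\ge 1$ layers, every achievable rate tuple $(R_1,\dots,R_K)$ (and hence every point of the capacity region) satisfies $$\sum_{k=1}^{K}\omega_k R_k\;\le\;\sum_{q=1}^{Q}\max_{k\in\{1,\dots,K\}}\Big(\omega_{\pi(k)}\,\Pr\big[\max(N_{\pi(k)},N_{\pi(k+1)},\dots,N_{\pi(K)})\ge q\big]\Big)$$ for every weight vector $(\omega_1,\dots,\omega_K)\in\mathbb{R}_+^K$ and every permutation $\pi$ of $\{1,\dots,K\}$.
   Context: Layered packet erasure broadcast channel (LPE-BC) with channel output feedback (COF): fix integers $K$ (number of users) and $Q$ (number of layers) and a finite field $\mathcal{X}$. In each time slot $t$ the transmitter sends $X_t=(X_{1,t},\dots,X_{Q,t})\in\mathcal{X}^Q$. A random channel state $N_t=(N_{1,t},\dots,N_{K,t})\in\{0,1,\dots,Q\}^K$, i.i.d. across slots with an arbitrary fixed joint distribution of the components $(N_1,\dots,N_K)$ (components may be dependent), determines the output of user $k$: $Y_{k,t}=(X_{1,t},\dots,X_{N_{k,t},t})$ if $N_{k,t}>0$ and $Y_{k,t}=\mathsf{e}$ (a fixed erasure symbol) if $N_{k,t}=0$. A code of length $n$ with rates $(R_1,\dots,R_K)$ (measured in packets, i.e. field symbols, per slot) has independent uniform messages $W_k$ taking $|\mathcal{X}|^{nR_k}$ values; with feedback the encoder at time $t$ is $X_t=f_t(W_1,\dots,W_K,N_1,\dots,N_{t-1})$; receiver $k$ knows all states $N_1,\dots,N_n$ and decodes $\hat W_k=\mathrm{dec}_k(Y_k^n,N_1,\dots,N_n)$.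 The error probability is $\Pr[\exists k:\hat W_k\ne W_k]$; a rate tuple is achievable if there is a sequence of codes with error probability tending to $0$ as $n\to\infty$; the capacity region is the convex closure of the set of achievable rate tuples. *)

theory Defs
  imports "HOL-Probability.Probability"
begin

text \<open>
  Users are indexed 0..K-1 (paper: 1..K), layers 1..Q, time slots 0..n-1.
  A channel state is a function N :: nat => nat (N k = number of layers received by user k);
  a transmitted symbol is X :: nat => 'f (X q = packet on layer q, q = 1..Q).
\<close>

definition lpe_output :: "(nat \<Rightarrow> 'f) \<Rightarrow> (nat \<Rightarrow> nat) \<Rightarrow> nat \<Rightarrow> 'f list option" where
  "lpe_output X N k = (if N k = 0 then None else Some (map X [1..<N k + 1]))"

definition num_msgs :: "'f::{finite,field} itself \<Rightarrow> nat \<Rightarrow> real \<Rightarrow> nat" where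
  "num_msgs _ n r = nat \<lfloor>real CARD('f) powr (real n * r)\<rfloor>"

definition msg_set :: "'f::{finite,field} itself \<Rightarrow> nat \<Rightarrow> nat \<Rightarrow> (nat \<Rightarrow> real) \<Rightarrow> (nat \<Rightarrow> nat) set" where
  "msg_set F K n R = PiE {..<K} (\<lambda>k. {..<num_msgs F n (R k)})"

text \<open>Feedback encoder: enc t W past gives X_t from messages W and past states N_0..N_{t-1}
  (passed as the list take t ns). Decoder: dec k Yk ns estimates W k from user k's outputs and all states.\<close>

definition user_outputs ::
  "nat \<Rightarrow> (nat \<Rightarrow> (nat \<Rightarrow> nat) \<Rightarrow> (nat \<Rightarrow> nat) list \<Rightarrow> (nat \<Rightarrow> 'f))
     \<Rightarrow> (nat \<Rightarrow> nat) \<Rightarrow> (nat \<Rightarrow> nat) list \<Rightarrow> nat \<Rightarrow> 'f list option list" where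
  "user_outputs n enc W ns k = map (\<lambda>t. lpe_output (enc t W (take t ns)) (ns ! t) k) [0..<n]"

definition state_set :: "nat \<Rightarrow> nat \<Rightarrow> (nat \<Rightarrow> nat) set" where
  "state_set K Q = {N. (\<forall>k<K. N k \<le> Q) \<and> (\<forall>k\<ge>K. N k = 0)}"

definition error_prob ::
  "'f::{finite,field} itself \<Rightarrow> nat \<Rightarrow> nat \<Rightarrow> (nat \<Rightarrow> nat) pmf \<Rightarrow> nat \<Rightarrow> (nat \<Rightarrow> real)
     \<Rightarrow> (nat \<Rightarrow> (nat \<Rightarrow> nat) \<Rightarrow> (nat \<Rightarrow> nat) list \<Rightarrow> (nat \<Rightarrow> 'f))
     \<Rightarrow> (nat \<Rightarrow> 'f list option list \<Rightarrow> (nat \<Rightarrow> nat) list \<Rightarrow> nat) \<Rightarrow> real" where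
  "error_prob F K Q P n R enc dec =
     (1 / real (card (msg_set F K n R))) *
     (\<Sum>W\<in>msg_set F K n R.
        \<Sum>ns\<in>{ns. length ns = n \<and> set ns \<subseteq> state_set K Q}.
          (\<Prod>t<n. pmf P (ns ! t)) *
          (if \<exists>k<K. dec k (user_outputs n enc W ns k) ns \<noteq> W k then 1 else 0))"

definition achievable ::
  "'f::{finite,field} itself \<Rightarrow> nat \<Rightarrow> nat \<Rightarrow> (nat \<Rightarrow> nat) pmf \<Rightarrow> (nat \<Rightarrow> real) \<Rightarrow> bool" where
  "achievable F K Q P R \<longleftrightarrow> (\<forall>k<K. 0 \<le> R k) \<and>
     (\<exists>enc dec. (\<lambda>n. error_prob F K Q P n R (enc n) (dec n)) \<longlonglongrightarrow> 0)"

end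

theory Submission
  imports Defs
begin

(*
  Let virtual receiver k observe everything users \<pi> k, ..., \<pi> (K - 1) observe; in slot t it
  receives layers 1, ..., max_{j \<ge> k} N_{\<pi> j, t}. By Fano's inequality its observations carry
  about log M_{\<pi> k} nats about W_{\<pi> k} given the states and W_{\<pi> (k+1)}, ..., W_{\<pi> (K-1)}.
  Expand this conditional mutual information by the chain rule over the slot-layer pairs (t, q):
  packet X_{q,t} reaches receiver k with probability p_k(q) = Pr[max_{j \<ge> k} N_{\<pi> j} \<ge> q],
  independently of everything the encoder knows at time t, so the information is
  \<Sum>_{t,q} p_k(q) (h_k(k+1) - h_k(k)), where h_k(m) is the entropy of X_{q,t} given the past
  observations of receiver k, the past states and W_{\<pi> m}, ..., W_{\<pi> (K-1)}. Receiver k+1 is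
  degraded with respect to receiver k, so h_k(k+1) \<le> h_{k+1}(k+1), and the weighted sum over k
  telescopes to at most max_k \<omega>_{\<pi> k} p_k(q) log |F| per pair (t, q). Dividing by n log |F|
  and letting the error probability vanish gives the bound.
*)

lemma neg_x_ln_x_le_1: "0 \<le> x \<Longrightarrow> - (x * ln x) \<le> 1" for x :: real
proof (cases "x = 0")
  case False
  assume x: "0 \<le> x"
  then have xp: "0 < x" using False by simp
  have "ln (1 / x) \<le> 1 / x - 1" using xp by (intro ln_le_minus_one) simp
  then have "- ln x \<le> 1 / x - 1" using xp by (simp add: ln_div)
  then have "x * (- ln x) \<le> x * (1 / x - 1)" using xp by (intro mult_left_mono) auto
  then show ?thesis using xp by (simp add: algebra_simps)
qed simp

lemma neg_x_ln_x_le_sqrt: "0 \<le> x \<Longrightarrow> - (x * ln x) \<le> 2 * sqrt x" for x :: real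
proof (cases "x = 0")
  case False
  assume x: "0 \<le> x"
  then have xp: "0 < x" using False by simp
  have sp: "0 < sqrt x" using xp by simp
  have "ln (1 / sqrt x) \<le> 1 / sqrt x - 1" using sp by (intro ln_le_minus_one) simp
  moreover have "ln (1 / sqrt x) = - ln x / 2" using xp by (simp add: ln_div ln_sqrt)
  ultimately have "- ln x \<le> 2 / sqrt x - 2" by simp
  then have "x * (- ln x) \<le> x * (2 / sqrt x - 2)" using xp by (intro mult_left_mono) auto
  also have "x * (2 / sqrt x - 2) = 2 * sqrt x - 2 * x"
    using xp by (simp add: field_simps real_sqrt_mult[symmetric] flip: power2_eq_square)
  finally show ?thesis using xp by simp
qed simp

lemma neg_x_ln_x_le_linear:
  fixes p :: real and m :: nat
  assumes p: "0 \<le> p" and m: "1 \<le> m"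
  shows "- (p * ln p) \<le> 2 * ln m * p + 2 / m"
proof (cases "p < 1 / (real m)^2")
  case True
  have "- (p * ln p) \<le> 2 * sqrt p" by (rule neg_x_ln_x_le_sqrt[OF p])
  also have "sqrt p \<le> sqrt (1 / (real m)^2)" using True by simp
  also have "sqrt (1 / (real m)^2) = 1 / m" using m by (simp add: real_sqrt_divide)
  finally have "- (p * ln p) \<le> 2 / m" by simp
  moreover have "0 \<le> 2 * ln m * p" using m p by simp
  ultimately show ?thesis by linarith
next
  case False
  then have "0 < p" using m by (smt (verit) of_nat_1 of_nat_le_iff one_le_power zero_less_divide_1_iff)
  moreover have "ln (1 / (real m)^2) \<le> ln p" using False \<open>0 < p\<close> m by (subst ln_le_cancel_iff) auto
  moreover have "ln (1 / (real m)^2) = - (2 * ln m)" using m by (simp add: ln_div ln_realpow)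
  ultimately have "p * (- ln p) \<le> p * (2 * ln m)" by (intro mult_left_mono) auto
  then have "- (p * ln p) \<le> 2 * ln m * p" by (simp add: algebra_simps)
  moreover have "0 \<le> 2 / real m" by simp
  ultimately show ?thesis by linarith
qed

(* Random variables are functions on a finite sample space A with point masses w; entropies
   are in nats. *)
definition fiber_prob :: "'a set \<Rightarrow> ('a \<Rightarrow> real) \<Rightarrow> ('a \<Rightarrow> 'x) \<Rightarrow> 'a \<Rightarrow> real" where
  "fiber_prob A w X a = sum w {a'\<in>A. X a' = X a}"

definition fin_entropy :: "'a set \<Rightarrow> ('a \<Rightarrow> real) \<Rightarrow> ('a \<Rightarrow> 'x) \<Rightarrow> real" where
  "fin_entropy A w X = - (\<Sum>a\<in>A. w a * ln (fiber_prob A w X a))"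

definition fin_cond_entropy :: "'a set \<Rightarrow> ('a \<Rightarrow> real) \<Rightarrow> ('a \<Rightarrow> 'x) \<Rightarrow> ('a \<Rightarrow> 'y) \<Rightarrow> real" where
  "fin_cond_entropy A w X Y = fin_entropy A w (\<lambda>a. (X a, Y a)) - fin_entropy A w Y"

locale fin_distr =
  fixes A :: "'a set" and w :: "'a \<Rightarrow> real"
  assumes finite_A: "finite A" and w_nonneg: "\<And>a. a \<in> A \<Longrightarrow> 0 \<le> w a" and sum_w: "sum w A = 1"
begin

lemma fiber_prob_ge: "a \<in> A \<Longrightarrow> w a \<le> fiber_prob A w X a"
  unfolding fiber_prob_def using finite_A w_nonneg by (intro member_le_sum) auto

lemma fiber_prob_pos: "a \<in> A \<Longrightarrow> 0 < w a \<Longrightarrow> 0 < fiber_prob A w X a"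
  using fiber_prob_ge by (meson less_le_trans)

lemma fiber_prob_cong:
  assumes "\<And>a a'. a \<in> A \<Longrightarrow> a' \<in> A \<Longrightarrow> (X a = X a') = (Y a = Y a')" "a \<in> A"
  shows "fiber_prob A w X a = fiber_prob A w Y a"
  unfolding fiber_prob_def using assms by (intro sum.cong refl Collect_cong) blast

lemma fin_entropy_cong:
  assumes "\<And>a a'. a \<in> A \<Longrightarrow> a' \<in> A \<Longrightarrow> (X a = X a') = (Y a = Y a')"
  shows "fin_entropy A w X = fin_entropy A w Y"
  unfolding fin_entropy_def using fiber_prob_cong[OF assms] by (intro arg_cong[where f=uminus] sum.cong) auto

lemma fin_entropy_mono:
  assumes "\<And>a a'. a \<in> A \<Longrightarrow> a' \<in> A \<Longrightarrow> Y a = Y a' \<Longrightarrow> X a = X a'"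
  shows "fin_entropy A w X \<le> fin_entropy A w Y"
proof -
  have "(\<Sum>a\<in>A. w a * ln (fiber_prob A w Y a)) \<le> (\<Sum>a\<in>A. w a * ln (fiber_prob A w X a))"
  proof (intro sum_mono)
    fix a assume a: "a \<in> A"
    show "w a * ln (fiber_prob A w Y a) \<le> w a * ln (fiber_prob A w X a)"
    proof (cases "w a = 0")
      case False
      then have p: "0 < fiber_prob A w Y a" using a w_nonneg[OF a] by (intro fiber_prob_pos) auto
      have sub: "{a'\<in>A. Y a' = Y a} \<subseteq> {a'\<in>A. X a' = X a}" using assms a by blast
      have "fiber_prob A w Y a \<le> fiber_prob A w X a" unfolding fiber_prob_def
        by (rule sum_mono2) (use sub finite_A w_nonneg in auto)
      then have "ln (fiber_prob A w Y a) \<le> ln (fiber_prob A w X a)" using p by simp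
      then show ?thesis using w_nonneg[OF a] by (simp add: mult_left_mono)
    qed simp
  qed
  then show ?thesis unfolding fin_entropy_def by simp
qed

lemma fin_entropy_const: "fin_entropy A w (\<lambda>a. c) = 0"
  unfolding fin_entropy_def fiber_prob_def using sum_w by simp

lemma sum_by_value: "(\<Sum>a\<in>A. w a * g (X a)) = (\<Sum>v\<in>X ` A. sum w {a\<in>A. X a = v} * g v)"
proof -
  have "(\<Sum>a\<in>A. w a * g (X a)) = (\<Sum>v\<in>X ` A. \<Sum>a\<in>{a\<in>A. X a = v}. w a * g (X a))"
    by (rule sum.image_gen[OF finite_A])
  also have "\<dots> = (\<Sum>v\<in>X ` A. sum w {a\<in>A. X a = v} * g v)"
    by (intro sum.cong refl) (simp add: sum_distrib_right)
  finally show ?thesis .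
qed

lemma gibbs_inequality:
  assumes qnn: "\<And>v. v \<in> X ` A \<Longrightarrow> 0 \<le> q v" and qs: "sum q (X ` A) \<le> 1"
    and qpos: "\<And>a. a \<in> A \<Longrightarrow> 0 < w a \<Longrightarrow> 0 < q (X a)"
  shows "(\<Sum>a\<in>A. w a * ln (q (X a) / fiber_prob A w X a)) \<le> 0"
proof -
  define f where "f v = (if sum w {a\<in>A. X a = v} = 0 then 0 else q v / sum w {a\<in>A. X a = v})" for v
  have "(\<Sum>a\<in>A. w a * ln (q (X a) / fiber_prob A w X a)) \<le> (\<Sum>a\<in>A. w a * (f (X a) - 1))"
  proof (intro sum_mono)
    fix a assume a: "a \<in> A"
    show "w a * ln (q (X a) / fiber_prob A w X a) \<le> w a * (f (X a) - 1)"
    proof (cases "w a = 0")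
      case False
      then have wp: "0 < w a" using w_nonneg[OF a] by simp
      have p: "0 < fiber_prob A w X a" using a wp by (intro fiber_prob_pos) auto
      have "f (X a) = q (X a) / fiber_prob A w X a" using p unfolding f_def fiber_prob_def by auto
      moreover have "ln (q (X a) / fiber_prob A w X a) \<le> q (X a) / fiber_prob A w X a - 1"
        using qpos[OF a wp] p by (intro ln_le_minus_one) simp
      ultimately show ?thesis using wp by (simp add: mult_left_mono)
    qed simp
  qed
  also have "\<dots> = (\<Sum>a\<in>A. w a * f (X a)) - 1" using sum_w
    by (simp add: sum_subtractf right_diff_distrib)
  also have "(\<Sum>a\<in>A. w a * f (X a)) = (\<Sum>v\<in>X ` A. sum w {a\<in>A. X a = v} * f v)"
    by (rule sum_by_value)
  also have "\<dots> \<le> (\<Sum>v\<in>X ` A. q v)"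
    by (intro sum_mono) (auto simp: f_def qnn)
  finally show ?thesis using qs by simp
qed

lemma fin_entropy_le_ln_card:
  shows "fin_entropy A w X \<le> ln (card (X ` A))"
proof (cases "A = {}")
  case True then show ?thesis using sum_w by simp
next
  case False
  define c where "c = card (X ` A)"
  have cp: "0 < c" using False finite_A unfolding c_def by (simp add: card_gt_0_iff)
  have g: "(\<Sum>a\<in>A. w a * ln ((\<lambda>v. 1 / real c) (X a) / fiber_prob A w X a)) \<le> 0"
    by (rule gibbs_inequality) (use cp in \<open>auto simp: c_def\<close>)
  have "(\<Sum>a\<in>A. w a * ln ((\<lambda>v. 1 / real c) (X a) / fiber_prob A w X a))
      = (\<Sum>a\<in>A. w a * (- ln c - ln (fiber_prob A w X a)))"
  proof (intro sum.cong refl)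
    fix a assume a: "a \<in> A"
    show "w a * ln ((\<lambda>v. 1 / real c) (X a) / fiber_prob A w X a) = w a * (- ln c - ln (fiber_prob A w X a))"
    proof (cases "w a = 0")
      case False
      then have "0 < fiber_prob A w X a" using a w_nonneg[OF a] by (intro fiber_prob_pos) auto
      then have "ln (1 / real c / fiber_prob A w X a) = ln (1 / real c) - ln (fiber_prob A w X a)"
        using cp by (intro ln_divide_pos) auto
      moreover have "ln (1 / real c) = - ln c" using cp by (simp add: ln_div)
      ultimately show ?thesis by simp
    qed simp
  qed
  also have "\<dots> = - ln c + fin_entropy A w X" unfolding fin_entropy_def using sum_w
    by (simp add: right_diff_distrib sum_subtractf sum_negf sum_distrib_right[symmetric])
  finally have "(\<Sum>a\<in>A. w a * ln ((\<lambda>v. 1 / real c) (X a) / fiber_prob A w X a)) = - ln c + fin_entropy A w X" .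
  with g show ?thesis unfolding c_def by linarith
qed

lemma sum_fiber_weights_marginal: "(\<Sum>x\<in>X ` A. sum w {a\<in>A. (X a, Z a) = (x, z)}) = sum w {a\<in>A. Z a = z}"
proof -
  have "(\<Sum>x\<in>X ` A. sum w {a\<in>A. (X a, Z a) = (x, z)})
      = (\<Sum>x\<in>X ` A. \<Sum>a\<in>{a\<in>A. X a = x}. (if Z a = z then w a else 0))"
  proof (rule sum.cong[OF refl])
    fix x
    have e: "{a\<in>A. (X a, Z a) = (x, z)} = {a\<in>{a\<in>A. X a = x}. Z a = z}" by auto
    have "finite {a\<in>A. X a = x}" using finite_A by simp
    then show "sum w {a\<in>A. (X a, Z a) = (x, z)} = (\<Sum>a\<in>{a\<in>A. X a = x}. (if Z a = z then w a else 0))"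
      unfolding e by (rule sum.inter_filter)
  qed
  also have "\<dots> = (\<Sum>a\<in>A. (if Z a = z then w a else 0))"
    by (rule sum.image_gen[OF finite_A, symmetric])
  also have "\<dots> = sum w {a\<in>A. Z a = z}"
    by (simp add: sum.inter_filter finite_A)
  finally show ?thesis .
qed

lemma sum_markov_product_le_1:
  "(\<Sum>(x, y, z)\<in>(\<lambda>a. (X a, Y a, Z a)) ` A.
      sum w {a\<in>A. (X a, Z a) = (x, z)} * sum w {a\<in>A. (Y a, Z a) = (y, z)} / sum w {a\<in>A. Z a = z}) \<le> 1"
proof -
  define PZ where "PZ z = sum w {a\<in>A. Z a = z}" for z
  define PXZ where "PXZ x z = sum w {a\<in>A. (X a, Z a) = (x, z)}" for x z
  define PYZ where "PYZ y z = sum w {a\<in>A. (Y a, Z a) = (y, z)}" for y z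
  have PZ_nonneg: "0 \<le> PZ z" for z unfolding PZ_def using w_nonneg by (intro sum_nonneg) auto
  have "(\<Sum>(x, y, z)\<in>(\<lambda>a. (X a, Y a, Z a)) ` A. PXZ x z * PYZ y z / PZ z)
      \<le> (\<Sum>(x, y, z)\<in>X ` A \<times> Y ` A \<times> Z ` A. PXZ x z * PYZ y z / PZ z)"
    using finite_A PZ_nonneg w_nonneg
    by (intro sum_mono2) (auto simp: PXZ_def PYZ_def intro!: divide_nonneg_nonneg mult_nonneg_nonneg sum_nonneg)
  also have "\<dots> = (\<Sum>z\<in>Z ` A. (\<Sum>x\<in>X ` A. PXZ x z) * (\<Sum>y\<in>Y ` A. PYZ y z) / PZ z)"
    by (simp add: sum.cartesian_product[symmetric] sum_distrib_left sum_distrib_right sum_divide_distrib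
        sum.swap[of _ "Z ` A"] sum.swap[of _ "Y ` A" "X ` A"])
  also have "\<dots> = (\<Sum>z\<in>Z ` A. PZ z * PZ z / PZ z)"
    using sum_fiber_weights_marginal[of X Z] sum_fiber_weights_marginal[of Y Z]
    unfolding PXZ_def PYZ_def PZ_def by simp
  also have "\<dots> \<le> (\<Sum>z\<in>Z ` A. PZ z)"
    by (intro sum_mono) (auto simp: PZ_nonneg)
  also have "\<dots> = 1"
    unfolding PZ_def using sum_w by (simp flip: sum.image_gen[OF finite_A])
  finally show ?thesis unfolding PXZ_def PYZ_def PZ_def .
qed

lemma fin_entropy_submodular:
  "fin_entropy A w (\<lambda>a. (X a, Y a, Z a)) + fin_entropy A w Z
     \<le> fin_entropy A w (\<lambda>a. (X a, Z a)) + fin_entropy A w (\<lambda>a. (Y a, Z a))"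
proof -
  define G where "G = (\<lambda>a. (X a, Y a, Z a))"
  define pXZ where "pXZ = fiber_prob A w (\<lambda>a. (X a, Z a))"
  define pYZ where "pYZ = fiber_prob A w (\<lambda>a. (Y a, Z a))"
  define pZ where "pZ = fiber_prob A w Z"
  define q where "q = (\<lambda>(x, y, z). sum w {a\<in>A. (X a, Z a) = (x, z)} * sum w {a\<in>A. (Y a, Z a) = (y, z)}
    / sum w {a\<in>A. Z a = z})"
  have qG: "q (G a) = pXZ a * pYZ a / pZ a" for a
    unfolding q_def G_def pXZ_def pYZ_def pZ_def fiber_prob_def by simp
  have q_nonneg: "0 \<le> q v" for v
    unfolding q_def using w_nonneg
    by (auto split: prod.splits intro!: divide_nonneg_nonneg mult_nonneg_nonneg sum_nonneg)
  have q_sum: "sum q (G ` A) \<le> 1"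
    using sum_markov_product_le_1[where X=X and Y=Y and Z=Z] unfolding q_def G_def .
  have q_pos: "0 < q (G a)" if "a \<in> A" "0 < w a" for a
    unfolding qG pXZ_def pYZ_def pZ_def using that by (intro divide_pos_pos mult_pos_pos fiber_prob_pos)
  have "(\<Sum>a\<in>A. w a * ln (q (G a) / fiber_prob A w G a)) \<le> 0"
    using q_nonneg q_sum q_pos by (intro gibbs_inequality) auto
  also have "(\<Sum>a\<in>A. w a * ln (q (G a) / fiber_prob A w G a)) =
     (\<Sum>a\<in>A. w a * ln (pXZ a) + w a * ln (pYZ a) - w a * ln (pZ a) - w a * ln (fiber_prob A w G a))"
  proof (intro sum.cong refl)
    fix a assume a: "a \<in> A"
    show "w a * ln (q (G a) / fiber_prob A w G a) =
      w a * ln (pXZ a) + w a * ln (pYZ a) - w a * ln (pZ a) - w a * ln (fiber_prob A w G a)"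
    proof (cases "w a = 0")
      case False
      then have "0 < w a" using w_nonneg[OF a] by simp
      then have "0 < pXZ a" "0 < pYZ a" "0 < pZ a" "0 < fiber_prob A w G a"
        using a unfolding pXZ_def pYZ_def pZ_def by (auto intro!: fiber_prob_pos)
      then show ?thesis unfolding qG by (simp add: ln_divide_pos ln_mult algebra_simps)
    qed simp
  qed
  also have "\<dots> = - fin_entropy A w (\<lambda>a. (X a, Z a)) - fin_entropy A w (\<lambda>a. (Y a, Z a))
      + fin_entropy A w Z + fin_entropy A w G"
    unfolding fin_entropy_def pXZ_def pYZ_def pZ_def by (simp add: sum.distrib sum_subtractf)
  finally show ?thesis unfolding G_def by linarith
qed

lemma fin_cond_entropy_mono:
  assumes dep: "\<And>a a'. a \<in> A \<Longrightarrow> a' \<in> A \<Longrightarrow> Y a = Y a' \<Longrightarrow> Z a = Z a'"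
  shows "fin_cond_entropy A w X Y \<le> fin_cond_entropy A w X Z"
proof -
  have s: "fin_entropy A w (\<lambda>a. (X a, Y a, Z a)) + fin_entropy A w Z
      \<le> fin_entropy A w (\<lambda>a. (X a, Z a)) + fin_entropy A w (\<lambda>a. (Y a, Z a))"
    by (rule fin_entropy_submodular)
  have e1: "fin_entropy A w (\<lambda>a. (X a, Y a, Z a)) = fin_entropy A w (\<lambda>a. (X a, Y a))"
    by (rule fin_entropy_cong) (metis dep prod.inject)
  have e2: "fin_entropy A w (\<lambda>a. (Y a, Z a)) = fin_entropy A w Y"
    by (rule fin_entropy_cong) (metis dep prod.inject)
  show ?thesis using s e1 e2 unfolding fin_cond_entropy_def by linarith
qed

lemma fin_cond_entropy_nonneg: "0 \<le> fin_cond_entropy A w X Y"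
  unfolding fin_cond_entropy_def using fin_entropy_mono[of "\<lambda>a. (X a, Y a)" Y] by auto

lemma fin_cond_entropy_const: "fin_cond_entropy A w X (\<lambda>a. c) = fin_entropy A w X"
proof -
  have "fin_entropy A w (\<lambda>a. (X a, c)) = fin_entropy A w X" by (rule fin_entropy_cong) auto
  then show ?thesis unfolding fin_cond_entropy_def fin_entropy_const by simp
qed

lemma fin_cond_entropy_le_entropy: "fin_cond_entropy A w X Y \<le> fin_entropy A w X"
  using fin_cond_entropy_mono[of Y "\<lambda>a. ()" X] fin_cond_entropy_const[of X "()"] by simp

lemma fin_entropy_subadditive: "fin_entropy A w (\<lambda>a. (X a, Y a)) \<le> fin_entropy A w X + fin_entropy A w Y"
proof -
  have "fin_entropy A w (\<lambda>a. (X a, Y a, ())) + fin_entropy A w (\<lambda>a. ()) \<le>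
     fin_entropy A w (\<lambda>a. (X a, ())) + fin_entropy A w (\<lambda>a. (Y a, ()))"
    by (rule fin_entropy_submodular)
  moreover have "fin_entropy A w (\<lambda>a. (X a, Y a, ())) = fin_entropy A w (\<lambda>a. (X a, Y a))" by (rule fin_entropy_cong) auto
  moreover have "fin_entropy A w (\<lambda>a. (X a, ())) = fin_entropy A w X" by (rule fin_entropy_cong) auto
  moreover have "fin_entropy A w (\<lambda>a. (Y a, ())) = fin_entropy A w Y" by (rule fin_entropy_cong) auto
  ultimately show ?thesis using fin_entropy_const[of "()"] by linarith
qed

lemma fin_cond_entropy_eq_0:
  assumes "\<And>a a'. a \<in> A \<Longrightarrow> a' \<in> A \<Longrightarrow> Y a = Y a' \<Longrightarrow> X a = X a'"
  shows "fin_cond_entropy A w X Y = 0"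
  unfolding fin_cond_entropy_def by (subst fin_entropy_cong[of _ Y]) (metis assms prod.inject, simp)

lemma fin_cond_entropy_snoc:
  "fin_cond_entropy A w (\<lambda>a. f a @ [g a]) C = fin_cond_entropy A w g (\<lambda>a. (f a, C a)) + fin_cond_entropy A w f C"
proof -
  have "fin_entropy A w (\<lambda>a. (f a @ [g a], C a)) = fin_entropy A w (\<lambda>a. (g a, f a, C a))"
    by (rule fin_entropy_cong) auto
  then show ?thesis unfolding fin_cond_entropy_def by simp
qed

lemma sum_fiber_weights_in: "(\<Sum>v\<in>V \<inter> D ` A. sum w {a\<in>A. D a = v}) = sum w {a\<in>A. D a \<in> V}"
proof -
  have fin: "finite {a\<in>A. D a \<in> V}" using finite_A by simp
  have "sum w {a\<in>A. D a \<in> V} = (\<Sum>v\<in>D ` {a\<in>A. D a \<in> V}. sum w {a\<in>{a\<in>A. D a \<in> V}. D a = v})"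
    by (rule sum.image_gen[OF fin])
  also have "D ` {a\<in>A. D a \<in> V} = V \<inter> D ` A" by auto
  also have "(\<Sum>v\<in>V \<inter> D ` A. sum w {a\<in>{a\<in>A. D a \<in> V}. D a = v}) = (\<Sum>v\<in>V \<inter> D ` A. sum w {a\<in>A. D a = v})"
    by (intro sum.cong refl arg_cong[where f="sum w"]) auto
  finally show ?thesis ..
qed

lemma fin_entropy_by_value:
  "fin_entropy A w D = (\<Sum>v\<in>D ` A. - (sum w {a\<in>A. D a = v} * ln (sum w {a\<in>A. D a = v})))"
proof -
  have "fin_entropy A w D = - (\<Sum>a\<in>A. w a * (\<lambda>v. ln (sum w {a\<in>A. D a = v})) (D a))"
    unfolding fin_entropy_def fiber_prob_def by simp
  also have "\<dots> = - (\<Sum>v\<in>D ` A. sum w {a\<in>A. D a = v} * ln (sum w {a\<in>A. D a = v}))"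
    by (subst sum_by_value) simp
  finally show ?thesis by (simp add: sum_negf)
qed

(* X is determined by Xh together with D, which reveals X only when the decoder errs. The
   constants avoid the binary entropy function; they are harmless as the error tends to 0. *)
lemma fano_inequality:
  fixes X Xh :: "'a \<Rightarrow> nat"
  assumes range: "\<And>a. a \<in> A \<Longrightarrow> X a < m" and m: "1 \<le> m"
  shows "fin_cond_entropy A w X Xh \<le> 3 + 2 * sum w {a\<in>A. X a \<noteq> Xh a} * ln m"
proof -
  define D where "D a = (if X a = Xh a then None else Some (X a))" for a
  define P where "P v = sum w {a\<in>A. D a = v}" for v
  have P_nonneg: "0 \<le> P v" for v unfolding P_def using w_nonneg by (intro sum_nonneg) auto
  have card_errors: "card ((-{None}) \<inter> D ` A) \<le> m"
  proof -
    have "(-{None}) \<inter> D ` A \<subseteq> Some ` {..<m}" using range by (auto simp: D_def)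
    then show ?thesis using card_mono[of "Some ` {..<m}"] by (simp add: card_image)
  qed
  have "fin_cond_entropy A w X Xh = fin_entropy A w (\<lambda>a. (D a, Xh a)) - fin_entropy A w Xh"
    unfolding fin_cond_entropy_def
    by (subst fin_entropy_cong[of _ "\<lambda>a. (D a, Xh a)"]) (auto simp: D_def split: if_splits)
  also have "\<dots> \<le> fin_entropy A w D" using fin_entropy_subadditive[of D Xh] by simp
  also have "\<dots> = (\<Sum>v\<in>D ` A. - (P v * ln (P v)))" unfolding P_def by (rule fin_entropy_by_value)
  also have "\<dots> = (\<Sum>v\<in>{None} \<inter> D ` A. - (P v * ln (P v))) + (\<Sum>v\<in>(-{None}) \<inter> D ` A. - (P v * ln (P v)))"
    using finite_A by (subst sum.union_disjoint[symmetric]) (auto intro!: sum.cong)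
  also have "(\<Sum>v\<in>{None} \<inter> D ` A. - (P v * ln (P v))) \<le> 1"
    using neg_x_ln_x_le_1[OF P_nonneg] by (cases "None \<in> D ` A") auto
  also have "(\<Sum>v\<in>(-{None}) \<inter> D ` A. - (P v * ln (P v))) \<le>
       (\<Sum>v\<in>(-{None}) \<inter> D ` A. 2 * ln m * P v + 2 / m)"
    using neg_x_ln_x_le_linear[OF P_nonneg m] by (intro sum_mono) auto
  also have "\<dots> = 2 * ln m * (\<Sum>v\<in>(-{None}) \<inter> D ` A. P v) + card ((-{None}) \<inter> D ` A) * (2 / m)"
    by (simp add: sum.distrib sum_distrib_left)
  also have "(\<Sum>v\<in>(-{None}) \<inter> D ` A. P v) = sum w {a\<in>A. X a \<noteq> Xh a}"
    unfolding P_def sum_fiber_weights_in by (intro arg_cong[where f="sum w"]) (auto simp: D_def)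
  also have "card ((-{None}) \<inter> D ` A) * (2 / m) \<le> 2"
    using card_errors m by (simp add: field_simps)
  finally show ?thesis by (simp add: algebra_simps)
qed

end

lemma fiber_prob_eq_sum_if: "finite A \<Longrightarrow> fiber_prob A w X a = (\<Sum>a'\<in>A. if X a' = X a then w a' else 0)"
  unfolding fiber_prob_def by (simp add: sum.inter_filter)

lemma fin_entropy_bij_betw:
  assumes bij: "bij_betw h A B" and hw: "\<And>a. a \<in> A \<Longrightarrow> w a = v (h a)"
    and hX: "\<And>a. a \<in> A \<Longrightarrow> X a = Y (h a)" and fin: "finite A"
  shows "fin_entropy A w X = fin_entropy B v Y"
proof -
  have finB: "finite B" using bij fin bij_betw_finite by blast
  have pdeq: "fiber_prob B v Y (h a) = fiber_prob A w X a" if a: "a \<in> A" for a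
  proof -
    have "fiber_prob B v Y (h a) = (\<Sum>b\<in>B. if Y b = Y (h a) then v b else 0)" by (rule fiber_prob_eq_sum_if[OF finB])
    also have "\<dots> = (\<Sum>a'\<in>A. if Y (h a') = Y (h a) then v (h a') else 0)"
      by (rule sum.reindex_bij_betw[OF bij, symmetric])
    also have "\<dots> = (\<Sum>a'\<in>A. if X a' = X a then w a' else 0)"
      using a hw hX by (intro sum.cong refl) auto
    also have "\<dots> = fiber_prob A w X a" by (rule fiber_prob_eq_sum_if[OF fin, symmetric])
    finally show ?thesis .
  qed
  have "fin_entropy B v Y = - (\<Sum>b\<in>B. v b * ln (fiber_prob B v Y b))" unfolding fin_entropy_def ..
  also have "\<dots> = - (\<Sum>a\<in>A. v (h a) * ln (fiber_prob B v Y (h a)))"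
    by (subst sum.reindex_bij_betw[OF bij, symmetric]) simp
  also have "\<dots> = fin_entropy A w X" unfolding fin_entropy_def using hw pdeq by (simp cong: sum.cong)
  finally show ?thesis ..
qed

lemma fin_cond_entropy_bij_betw:
  assumes bij: "bij_betw h A B" and hw: "\<And>a. a \<in> A \<Longrightarrow> w a = v (h a)"
    and hX: "\<And>a. a \<in> A \<Longrightarrow> X a = X' (h a)" and hY: "\<And>a. a \<in> A \<Longrightarrow> Y a = Y' (h a)"
    and fin: "finite A"
  shows "fin_cond_entropy A w X Y = fin_cond_entropy B v X' Y'"
proof -
  have "fin_entropy A w (\<lambda>a. (X a, Y a)) = fin_entropy B v (\<lambda>b. (X' b, Y' b))"
    by (rule fin_entropy_bij_betw[OF bij]) (auto simp: hw hX hY fin)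
  moreover have "fin_entropy A w Y = fin_entropy B v Y'"
    by (rule fin_entropy_bij_betw[OF bij]) (auto simp: hw hY fin)
  ultimately show ?thesis unfolding fin_cond_entropy_def by simp
qed

lemma fiber_prob_product:
  assumes a: "a \<in> SA" and b: "b \<in> SB"
    and hG: "\<And>a' b'. a' \<in> SA \<Longrightarrow> b' \<in> SB \<Longrightarrow> G (a', b') = G (a, b) \<Longrightarrow> b' = b"
  shows "fiber_prob (SA \<times> SB) (\<lambda>(a, b). \<alpha> a * \<beta> b) G (a, b) = \<beta> b * fiber_prob SA \<alpha> (\<lambda>a. G (a, b)) a"
proof -
  have "{p \<in> SA \<times> SB. G p = G (a, b)} = {a' \<in> SA. G (a', b) = G (a, b)} \<times> {b}"
    using hG b by auto
  then show ?thesis unfolding fiber_prob_def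
    by (simp add: sum.cartesian_product[symmetric] sum_distrib_left mult.commute)
qed

lemma fin_entropy_product:
  fixes G :: "'a \<times> 'b \<Rightarrow> 'x"
  assumes da: "fin_distr SA \<alpha>" and finB: "finite SB" and bnn: "\<And>b. b \<in> SB \<Longrightarrow> 0 \<le> \<beta> b"
    and hG: "\<And>a b a' b'. a \<in> SA \<Longrightarrow> b \<in> SB \<Longrightarrow> a' \<in> SA \<Longrightarrow> b' \<in> SB \<Longrightarrow> G (a, b) = G (a', b') \<Longrightarrow> b = b'"
  shows "fin_entropy (SA \<times> SB) (\<lambda>(a, b). \<alpha> a * \<beta> b) G =
     - (\<Sum>b\<in>SB. \<beta> b * ln (\<beta> b)) + (\<Sum>b\<in>SB. \<beta> b * fin_entropy SA \<alpha> (\<lambda>a. G (a, b)))"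
proof -
  interpret fin_distr SA \<alpha> by fact
  define ww where "ww = (\<lambda>(a, b). \<alpha> a * \<beta> b)"
  have pdp: "fiber_prob (SA \<times> SB) ww G (a, b) = \<beta> b * fiber_prob SA \<alpha> (\<lambda>a. G (a, b)) a"
    if "a \<in> SA" "b \<in> SB" for a b
    unfolding ww_def using that hG by (intro fiber_prob_product) metis+
  have "fin_entropy (SA \<times> SB) ww G = - (\<Sum>a\<in>SA. \<Sum>b\<in>SB. ww (a, b) * ln (fiber_prob (SA \<times> SB) ww G (a, b)))"
    unfolding fin_entropy_def by (simp add: sum.cartesian_product)
  also have "\<dots> = - (\<Sum>a\<in>SA. \<Sum>b\<in>SB. \<alpha> a * \<beta> b * ln (\<beta> b) + \<beta> b * (\<alpha> a * ln (fiber_prob SA \<alpha> (\<lambda>a. G (a, b)) a)))"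
  proof (intro arg_cong[where f=uminus] sum.cong refl)
    fix a b assume a: "a \<in> SA" and b: "b \<in> SB"
    show "ww (a, b) * ln (fiber_prob (SA \<times> SB) ww G (a, b)) =
        \<alpha> a * \<beta> b * ln (\<beta> b) + \<beta> b * (\<alpha> a * ln (fiber_prob SA \<alpha> (\<lambda>a. G (a, b)) a))"
    proof (cases "\<alpha> a = 0 \<or> \<beta> b = 0")
      case True then show ?thesis unfolding ww_def by auto
    next
      case False
      then have ap: "0 < \<alpha> a" and bp: "0 < \<beta> b" using w_nonneg[OF a] bnn[OF b] by auto
      have pp: "0 < fiber_prob SA \<alpha> (\<lambda>a. G (a, b)) a" using a ap by (intro fiber_prob_pos) auto
      show ?thesis unfolding pdp[OF a b] unfolding ww_def using bp pp by (simp add: ln_mult algebra_simps)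
    qed
  qed
  also have "\<dots> = - ((\<Sum>a\<in>SA. \<alpha> a) * (\<Sum>b\<in>SB. \<beta> b * ln (\<beta> b)) +
       (\<Sum>b\<in>SB. \<beta> b * (\<Sum>a\<in>SA. \<alpha> a * ln (fiber_prob SA \<alpha> (\<lambda>a. G (a, b)) a))))"
    by (simp add: sum.distrib sum_distrib_left sum_distrib_right sum.swap[of _ SA] mult.assoc)
  also have "\<dots> = - (\<Sum>b\<in>SB. \<beta> b * ln (\<beta> b)) + (\<Sum>b\<in>SB. \<beta> b * fin_entropy SA \<alpha> (\<lambda>a. G (a, b)))"
    using sum_w unfolding fin_entropy_def by (simp add: sum_negf)
  finally show ?thesis unfolding ww_def .
qed

(* A symbol that is erased unless the independent component b satisfies E, and whose erasure
   pattern is revealed by the conditioning, carries its information only with weight Pr[E]. *)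
lemma fin_cond_entropy_product_erasure:
  fixes F :: "'a \<times> 'b \<Rightarrow> 'x option" and C :: "'a \<times> 'b \<Rightarrow> 'c" and c0 :: "'a \<Rightarrow> 'd"
  assumes da: "fin_distr SA \<alpha>" and finB: "finite SB" and bnn: "\<And>b. b \<in> SB \<Longrightarrow> 0 \<le> \<beta> b"
    and hF: "\<And>a b. a \<in> SA \<Longrightarrow> b \<in> SB \<Longrightarrow> F (a, b) = (if E b then Some (f a) else None)"
    and hC1: "\<And>a b a' b'. a \<in> SA \<Longrightarrow> b \<in> SB \<Longrightarrow> a' \<in> SA \<Longrightarrow> b' \<in> SB \<Longrightarrow> C (a, b) = C (a', b') \<Longrightarrow> b = b'"
    and hC2: "\<And>a b a'. a \<in> SA \<Longrightarrow> b \<in> SB \<Longrightarrow> a' \<in> SA \<Longrightarrow> E b \<Longrightarrow> (C (a, b) = C (a', b)) = (c0 a = c0 a')"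
  shows "fin_cond_entropy (SA \<times> SB) (\<lambda>(a, b). \<alpha> a * \<beta> b) F C
    = (\<Sum>b\<in>{b\<in>SB. E b}. \<beta> b) * fin_cond_entropy SA \<alpha> f c0"
proof -
  interpret fin_distr SA \<alpha> by fact
  have e1: "fin_entropy (SA \<times> SB) (\<lambda>(a, b). \<alpha> a * \<beta> b) (\<lambda>p. (F p, C p)) =
     - (\<Sum>b\<in>SB. \<beta> b * ln (\<beta> b)) + (\<Sum>b\<in>SB. \<beta> b * fin_entropy SA \<alpha> (\<lambda>a. (F (a, b), C (a, b))))"
    by (rule fin_entropy_product[OF da finB bnn]) (use hC1 in auto)
  have e2: "fin_entropy (SA \<times> SB) (\<lambda>(a, b). \<alpha> a * \<beta> b) C =
     - (\<Sum>b\<in>SB. \<beta> b * ln (\<beta> b)) + (\<Sum>b\<in>SB. \<beta> b * fin_entropy SA \<alpha> (\<lambda>a. C (a, b)))"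
    by (rule fin_entropy_product[OF da finB bnn]) (use hC1 in auto)
  have per: "fin_entropy SA \<alpha> (\<lambda>a. (F (a, b), C (a, b))) - fin_entropy SA \<alpha> (\<lambda>a. C (a, b)) =
      (if E b then fin_cond_entropy SA \<alpha> f c0 else 0)" if b: "b \<in> SB" for b
  proof (cases "E b")
    case True
    have "fin_entropy SA \<alpha> (\<lambda>a. (F (a, b), C (a, b))) = fin_entropy SA \<alpha> (\<lambda>a. (f a, c0 a))"
      by (rule fin_entropy_cong) (use True hF hC2 b in auto)
    moreover have "fin_entropy SA \<alpha> (\<lambda>a. C (a, b)) = fin_entropy SA \<alpha> c0"
      by (rule fin_entropy_cong) (use True hC2 b in auto)
    ultimately show ?thesis using True unfolding fin_cond_entropy_def by simp
  next
    case False
    have "fin_entropy SA \<alpha> (\<lambda>a. (F (a, b), C (a, b))) = fin_entropy SA \<alpha> (\<lambda>a. C (a, b))"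
      by (rule fin_entropy_cong) (use False hF b in auto)
    then show ?thesis using False by simp
  qed
  have "fin_cond_entropy (SA \<times> SB) (\<lambda>(a, b). \<alpha> a * \<beta> b) F C =
     (\<Sum>b\<in>SB. \<beta> b * (fin_entropy SA \<alpha> (\<lambda>a. (F (a, b), C (a, b))) - fin_entropy SA \<alpha> (\<lambda>a. C (a, b))))"
    unfolding fin_cond_entropy_def e1 e2 by (simp add: sum_subtractf right_diff_distrib)
  also have "\<dots> = (\<Sum>b\<in>SB. \<beta> b * (if E b then fin_cond_entropy SA \<alpha> f c0 else 0))"
    using per by (intro sum.cong refl) simp
  also have "\<dots> = (\<Sum>b\<in>SB. if E b then \<beta> b * fin_cond_entropy SA \<alpha> f c0 else 0)"
    by (intro sum.cong refl) simp
  also have "\<dots> = (\<Sum>b\<in>{b\<in>SB. E b}. \<beta> b * fin_cond_entropy SA \<alpha> f c0)"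
    using finB by (simp add: sum.inter_filter)
  also have "\<dots> = (\<Sum>b\<in>{b\<in>SB. E b}. \<beta> b) * fin_cond_entropy SA \<alpha> f c0"
    by (simp add: sum_distrib_right)
  finally show ?thesis .
qed

lemma finite_state_set: "finite (state_set K Q)"
proof -
  define ext where "ext f = (\<lambda>k. if k < K then f k else (0::nat))" for f :: "nat \<Rightarrow> nat"
  have "state_set K Q \<subseteq> ext ` (PiE {..<K} (\<lambda>_. {..Q}))"
  proof
    fix N assume N: "N \<in> state_set K Q"
    have "N = ext (restrict N {..<K})" using N unfolding ext_def state_set_def
      by (auto simp: fun_eq_iff)
    moreover have "restrict N {..<K} \<in> PiE {..<K} (\<lambda>_. {..Q})" using N unfolding state_set_def by auto
    ultimately show "N \<in> ext ` (PiE {..<K} (\<lambda>_. {..Q}))" by blast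
  qed
  then show ?thesis by (rule finite_subset) (intro finite_imageI finite_PiE; simp)
qed

lemma zero_in_state_set: "(\<lambda>_. 0) \<in> state_set K Q"
  unfolding state_set_def by simp

lemma weighted_telescoping_le:
  fixes a g c :: "nat \<Rightarrow> real"
  assumes "0 \<le> g 0" and ga: "\<And>k. k < K \<Longrightarrow> g k \<le> a k" and ag: "\<And>k. Suc k < K \<Longrightarrow> a k \<le> g (Suc k)"
    and aG: "\<And>k. k < K \<Longrightarrow> a k \<le> G" and cnn: "\<And>k. k < K \<Longrightarrow> 0 \<le> c k" and K: "1 \<le> K"
  shows "(\<Sum>k<K. c k * (a k - g k)) \<le> Max (c ` {..<K}) * G"
proof -
  define Mc where "Mc = Max (c ` {..<K})"
  have Mc: "c k \<le> Mc" if "k < K" for k unfolding Mc_def using that by (intro Max_ge) auto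
  have Mc0: "0 \<le> Mc" using Mc[of 0] cnn[of 0] K by simp
  have tel: "(\<Sum>k<Suc m. a k - g k) \<le> a m - g 0" if "m < K" for m
    using that
  proof (induction m)
    case 0 then show ?case by simp
  next
    case (Suc m)
    then have "(\<Sum>k<Suc m. a k - g k) \<le> a m - g 0" by simp
    moreover have "a m \<le> g (Suc m)" using ag Suc by simp
    ultimately show ?case by simp
  qed
  have "(\<Sum>k<K. c k * (a k - g k)) \<le> (\<Sum>k<K. Mc * (a k - g k))"
    using ga Mc cnn by (intro sum_mono mult_right_mono) auto
  also have "\<dots> = Mc * (\<Sum>k<K. a k - g k)" by (simp add: sum_distrib_left)
  also have "(\<Sum>k<K. a k - g k) \<le> G"
  proof -
    obtain m where m: "K = Suc m" using K by (cases K) auto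
    have "(\<Sum>k<K. a k - g k) \<le> a m - g 0" using tel[of m] m by simp
    also have "\<dots> \<le> G" using aG[of m] m assms(1) by simp
    finally show ?thesis .
  qed
  then have "Mc * (\<Sum>k<K. a k - g k) \<le> Mc * G" using Mc0 by (intro mult_left_mono) auto
  finally show ?thesis unfolding Mc_def .
qed

type_synonym outcome = "(nat \<Rightarrow> nat) \<times> (nat \<Rightarrow> nat) list"

locale lpe_code =
  fixes K Q :: nat and P :: "(nat \<Rightarrow> nat) pmf" and \<pi> :: "nat \<Rightarrow> nat"
    and M :: "nat \<Rightarrow> nat" and n :: nat
    and enc :: "nat \<Rightarrow> (nat \<Rightarrow> nat) \<Rightarrow> (nat \<Rightarrow> nat) list \<Rightarrow> (nat \<Rightarrow> 'f::{finite,field})"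
  assumes K_pos: "1 \<le> K" and Q_pos: "1 \<le> Q" and supp: "set_pmf P \<subseteq> state_set K Q"
    and perm: "\<pi> permutes {..<K}" and M_pos: "\<And>k. 1 \<le> M k"
begin

definition States :: "(nat \<Rightarrow> nat) set" where
  "States = state_set K Q"

definition Seqs :: "nat \<Rightarrow> (nat \<Rightarrow> nat) list set" where
  "Seqs m = {ns. length ns = m \<and> set ns \<subseteq> States}"

definition seq_prob :: "(nat \<Rightarrow> nat) list \<Rightarrow> real" where
  "seq_prob ns = prod_list (map (pmf P) ns)"

definition Msgs :: "(nat \<Rightarrow> nat) set" where
  "Msgs = PiE {..<K} (\<lambda>k. {..<M k})"

(* Messages and the states of the first t slots; outcome_prob makes the messages uniform and the
   states i.i.d. *)
definition Outcomes :: "nat \<Rightarrow> outcome set" where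
  "Outcomes t = Msgs \<times> Seqs t"

definition outcome_prob :: "outcome \<Rightarrow> real" where
  "outcome_prob om = seq_prob (snd om) / card Msgs"

abbreviation Omega :: "outcome set" where
  "Omega \<equiv> Outcomes n"

abbreviation ent :: "(outcome \<Rightarrow> 'x) \<Rightarrow> real" where
  "ent X \<equiv> fin_entropy Omega outcome_prob X"

abbreviation cond_ent :: "(outcome \<Rightarrow> 'x) \<Rightarrow> (outcome \<Rightarrow> 'y) \<Rightarrow> real" where
  "cond_ent X Y \<equiv> fin_cond_entropy Omega outcome_prob X Y"

(* Receiver k stands for users \<pi> k, ..., \<pi> (K - 1) together. *)
definition top_layer :: "nat \<Rightarrow> (nat \<Rightarrow> nat) \<Rightarrow> nat" where
  "top_layer k N = Max ((\<lambda>j. N (\<pi> j)) ` {k..<K})"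

(* The index i enumerates the slot-layer pairs (t, q) as i = t * Q + (q - 1). *)
definition slot :: "nat \<Rightarrow> nat" where
  "slot i = i div Q"

definition layer :: "nat \<Rightarrow> nat" where
  "layer i = i mod Q + 1"

definition obs_sym :: "nat \<Rightarrow> nat \<Rightarrow> outcome \<Rightarrow> 'f option" where
  "obs_sym k i om = (if layer i \<le> top_layer k (snd om ! slot i)
    then Some (enc (slot i) (fst om) (take (slot i) (snd om)) (layer i)) else None)"

definition obs_prefix :: "nat \<Rightarrow> nat \<Rightarrow> outcome \<Rightarrow> 'f option list" where
  "obs_prefix k i om = map (\<lambda>j. obs_sym k j om) [0..<i]"

definition msgs_from :: "nat \<Rightarrow> outcome \<Rightarrow> nat list" where
  "msgs_from k om = map (\<lambda>j. fst om (\<pi> j)) [k..<K]"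

(* The observations of receiver k before index i, as a function of the first t = slot i states
   only: in slot t every lower layer counts as received, which is what receiver k sees whenever
   it receives layer i itself. *)
definition past_sym :: "nat \<Rightarrow> nat \<Rightarrow> nat \<Rightarrow> outcome \<Rightarrow> 'f option" where
  "past_sym k t j a = (if slot j < t \<and> \<not> layer j \<le> top_layer k (snd a ! slot j) then None
    else Some (enc (slot j) (fst a) (take (slot j) (snd a)) (layer j)))"

definition past_prefix :: "nat \<Rightarrow> nat \<Rightarrow> nat \<Rightarrow> outcome \<Rightarrow> 'f option list" where
  "past_prefix k t i a = map (\<lambda>j. past_sym k t j a) [0..<i]"

definition sym_entropy :: "nat \<Rightarrow> nat \<Rightarrow> (outcome \<Rightarrow> 'u) \<Rightarrow> real" where
  "sym_entropy k i U = fin_cond_entropy (Outcomes (slot i)) outcome_prob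
    (\<lambda>a. enc (slot i) (fst a) (snd a) (layer i)) (\<lambda>a. (past_prefix k (slot i) i a, snd a, U a))"

definition layer_prob :: "nat \<Rightarrow> nat \<Rightarrow> real" where
  "layer_prob k q = measure_pmf.prob P {N. q \<le> top_layer k N}"

lemma finite_States: "finite States" unfolding States_def by (rule finite_state_set)
lemma finite_Seqs: "finite (Seqs m)" unfolding Seqs_def using finite_lists_length_eq[OF finite_States, of m]
  by (simp add: conj_commute)
lemma finite_Msgs: "finite Msgs" unfolding Msgs_def by (intro finite_PiE) auto
lemma Msgs_nonempty: "Msgs \<noteq> {}" unfolding Msgs_def using M_pos by (auto simp: PiE_eq_empty_iff Suc_le_eq)
lemma card_Msgs_pos: "0 < card Msgs" using finite_Msgs Msgs_nonempty by (simp add: card_gt_0_iff)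
lemma seq_prob_nonneg: "0 \<le> seq_prob ns" unfolding seq_prob_def by (induction ns) auto
lemma sum_pmf_States: "sum (pmf P) States = 1" using sum_pmf_eq_1[OF finite_States] supp unfolding States_def by auto

lemma Seqs_Suc: "Seqs (Suc m) = (\<lambda>(s, ns). s # ns) ` (States \<times> Seqs m)"
  unfolding Seqs_def by (auto simp: length_Suc_conv)

lemma sum_seq_prob: "sum seq_prob (Seqs m) = 1"
proof (induction m)
  case 0
  have "Seqs 0 = {[]}" unfolding Seqs_def by auto
  then show ?case by (simp add: seq_prob_def)
next
  case (Suc m)
  have inj: "inj_on (\<lambda>(s, ns). s # ns) (States \<times> Seqs m)" by (auto simp: inj_on_def)
  have "sum seq_prob (Seqs (Suc m)) = (\<Sum>(s, ns)\<in>States \<times> Seqs m. seq_prob (s # ns))"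
    unfolding Seqs_Suc by (subst sum.reindex[OF inj]) (simp add: case_prod_unfold)
  also have "\<dots> = (\<Sum>s\<in>States. \<Sum>ns\<in>Seqs m. pmf P s * seq_prob ns)"
    by (simp add: sum.cartesian_product seq_prob_def)
  also have "\<dots> = sum (pmf P) States * sum seq_prob (Seqs m)"
    by (rule sum_product[symmetric])
  finally show ?case using Suc sum_pmf_States by simp
qed

lemma fin_distr_Outcomes: "fin_distr (Outcomes t) outcome_prob"
proof
  show "finite (Outcomes t)" unfolding Outcomes_def using finite_Msgs finite_Seqs by simp
  show "0 \<le> outcome_prob a" for a unfolding outcome_prob_def using seq_prob_nonneg by simp
  have "sum outcome_prob (Outcomes t) = (\<Sum>W\<in>Msgs. \<Sum>ns\<in>Seqs t. seq_prob ns / card Msgs)"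
    unfolding Outcomes_def outcome_prob_def by (subst sum.cartesian_product) (simp add: case_prod_unfold)
  also have "\<dots> = card Msgs * (1 / card Msgs)"
    using sum_seq_prob[of t] by (simp add: sum_divide_distrib[symmetric])
  finally show "sum outcome_prob (Outcomes t) = 1" using card_Msgs_pos by simp
qed

lemma obs_prefix_chain_rule:
  "cond_ent (obs_prefix k i) C = (\<Sum>j<i. cond_ent (obs_sym k j) (\<lambda>om. (obs_prefix k j om, C om)))"
proof (induction i)
  case 0
  interpret fin_distr Omega outcome_prob by (rule fin_distr_Outcomes)
  show ?case unfolding obs_prefix_def by (simp add: fin_cond_entropy_eq_0)
next
  case (Suc i)
  interpret fin_distr Omega outcome_prob by (rule fin_distr_Outcomes)
  have "obs_prefix k (Suc i) = (\<lambda>om. obs_prefix k i om @ [obs_sym k i om])" unfolding obs_prefix_def by (auto simp: fun_eq_iff)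
  then have "cond_ent (obs_prefix k (Suc i)) C
      = cond_ent (obs_sym k i) (\<lambda>om. (obs_prefix k i om, C om)) + cond_ent (obs_prefix k i) C"
    using fin_cond_entropy_snoc[of "obs_prefix k i" "obs_sym k i" C] by simp
  then show ?case using Suc by simp
qed

lemma slot_mono: "j < i \<Longrightarrow> slot j \<le> slot i" unfolding slot_def by (simp add: div_le_mono)

lemma layer_less_same_slot: "j < i \<Longrightarrow> slot j = slot i \<Longrightarrow> layer j < layer i"
proof -
  assume ji: "j < i" and e: "slot j = slot i"
  define d where "d = slot i"
  have j: "j = Q * d + j mod Q" using e unfolding d_def slot_def by (metis div_mult_mod_eq mult.commute)
  have ii: "i = Q * d + i mod Q" unfolding d_def slot_def by (metis div_mult_mod_eq mult.commute)
  have "Q * d + j mod Q < Q * d + i mod Q" using ji j ii by linarith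
  then show ?thesis unfolding layer_def by simp
qed

lemma obs_prefix_eq_past_prefix:
  assumes len: "length ps = slot i" and E: "layer i \<le> top_layer k N"
  shows "obs_prefix k i (W, ps @ N # fut) = past_prefix k (slot i) i (W, ps)"
  unfolding obs_prefix_def past_prefix_def
proof (rule map_cong[OF refl])
  fix j assume "j \<in> set [0..<i]"
  then have ji: "j < i" by simp
  show "obs_sym k j (W, ps @ N # fut) = past_sym k (slot i) j (W, ps)"
  proof (cases "slot j < slot i")
    case True
    then show ?thesis unfolding obs_sym_def past_sym_def using len by (simp add: nth_append)
  next
    case False
    then have e: "slot j = slot i" using slot_mono[OF ji] by simp
    then have "layer j \<le> top_layer k N" using layer_less_same_slot[OF ji e] E by simp
    then show ?thesis unfolding obs_sym_def past_sym_def using len e by (simp add: nth_append)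
  qed
qed

lemma layer_prob_eq_sum: "layer_prob k q = (\<Sum>N\<in>{N\<in>States. q \<le> top_layer k N}. pmf P N)"
proof -
  have fin: "finite {N\<in>States. q \<le> top_layer k N}" using finite_States by simp
  have "layer_prob k q = measure_pmf.prob P ({N. q \<le> top_layer k N} \<inter> set_pmf P)"
    unfolding layer_prob_def by (simp add: measure_Int_set_pmf)
  also have "{N. q \<le> top_layer k N} \<inter> set_pmf P = {N\<in>States. q \<le> top_layer k N} \<inter> set_pmf P"
    using supp unfolding States_def by auto
  also have "measure_pmf.prob P \<dots> = measure_pmf.prob P {N\<in>States. q \<le> top_layer k N}"
    by (simp add: measure_Int_set_pmf)
  also have "\<dots> = (\<Sum>N\<in>{N\<in>States. q \<le> top_layer k N}. pmf P N)"
    by (rule measure_measure_pmf_finite[OF fin])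
  finally show ?thesis .
qed

definition join_state :: "outcome \<times> (nat \<Rightarrow> nat) \<times> (nat \<Rightarrow> nat) list \<Rightarrow> outcome" where
  "join_state p = (fst (fst p), snd (fst p) @ fst (snd p) # snd (snd p))"

lemma bij_betw_join_state:
  assumes "t < n"
  shows "bij_betw join_state (Outcomes t \<times> (States \<times> Seqs (n - Suc t))) Omega"
proof (rule bij_betw_byWitness[where f'="\<lambda>om. ((fst om, take t (snd om)), (snd om ! t, drop (Suc t) (snd om)))"])
  show "\<forall>a\<in>Omega. join_state ((fst a, take t (snd a)), snd a ! t, drop (Suc t) (snd a)) = a"
    unfolding join_state_def Outcomes_def Seqs_def using assms by (auto simp: id_take_nth_drop[symmetric])
  show "join_state ` (Outcomes t \<times> (States \<times> Seqs (n - Suc t))) \<subseteq> Omega"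
    unfolding join_state_def Outcomes_def Seqs_def using assms by auto
qed (use assms in \<open>auto simp: join_state_def Outcomes_def Seqs_def dest!: in_set_takeD in_set_dropD\<close>)

lemma outcome_prob_join_state:
  "outcome_prob (join_state (a, b)) = outcome_prob a * (pmf P (fst b) * seq_prob (snd b))"
  unfolding outcome_prob_def join_state_def seq_prob_def by simp

lemma sum_layer_event:
  "(\<Sum>b\<in>{b\<in>States \<times> Seqs m. q \<le> top_layer k (fst b)}. pmf P (fst b) * seq_prob (snd b)) = layer_prob k q"
proof -
  have "{b\<in>States \<times> Seqs m. q \<le> top_layer k (fst b)} = {N\<in>States. q \<le> top_layer k N} \<times> Seqs m" by auto
  then have "(\<Sum>b\<in>{b\<in>States \<times> Seqs m. q \<le> top_layer k (fst b)}. pmf P (fst b) * seq_prob (snd b))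
      = (\<Sum>N\<in>{N\<in>States. q \<le> top_layer k N}. \<Sum>fut\<in>Seqs m. pmf P N * seq_prob fut)"
    by (simp add: sum.cartesian_product case_prod_unfold)
  also have "\<dots> = layer_prob k q" unfolding layer_prob_eq_sum using sum_seq_prob[of m]
    by (simp add: sum_distrib_left[symmetric])
  finally show ?thesis .
qed

lemma cond_entropy_obs_sym:
  assumes i: "i < n * Q"
  shows "cond_ent (obs_sym k i) (\<lambda>om. (obs_prefix k i om, snd om, msgs_from m om))
    = layer_prob k (layer i) * sym_entropy k i (msgs_from m)"
proof -
  define t where "t = slot i"
  have tn: "t < n" using i Q_pos unfolding t_def slot_def by (simp add: div_less_iff_less_mult mult.commute)
  define B where "B = States \<times> Seqs (n - Suc t)"
  define beta where "beta b = pmf P (fst b) * seq_prob (snd b)" for b :: "(nat \<Rightarrow> nat) \<times> (nat \<Rightarrow> nat) list"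
  let ?C = "\<lambda>om. (obs_prefix k i om, snd om, msgs_from m om)"
  have "cond_ent (obs_sym k i) ?C =
      fin_cond_entropy (Outcomes t \<times> B) (\<lambda>(a, b). outcome_prob a * beta b) (obs_sym k i \<circ> join_state) (?C \<circ> join_state)"
    unfolding B_def beta_def
    by (rule fin_cond_entropy_bij_betw[OF bij_betw_join_state[OF tn], symmetric])
      (auto simp: outcome_prob_join_state fin_distr.finite_A[OF fin_distr_Outcomes] finite_States finite_Seqs)
  also have "\<dots> = (\<Sum>b\<in>{b\<in>B. layer i \<le> top_layer k (fst b)}. beta b) *
      fin_cond_entropy (Outcomes t) outcome_prob (\<lambda>a. enc t (fst a) (snd a) (layer i))
        (\<lambda>a. (past_prefix k t i a, snd a, msgs_from m a))"
  proof (rule fin_cond_entropy_product_erasure[OF fin_distr_Outcomes])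
    show "finite B" unfolding B_def using finite_States finite_Seqs by simp
    show "0 \<le> beta b" for b unfolding beta_def using seq_prob_nonneg by simp
    fix a b a' b' assume a: "a \<in> Outcomes t" and b: "b \<in> B" and a': "a' \<in> Outcomes t"
    have la: "length (snd a) = t" and la': "length (snd a') = t" using a a' unfolding Outcomes_def Seqs_def by auto
    show "(obs_sym k i \<circ> join_state) (a, b)
        = (if layer i \<le> top_layer k (fst b) then Some (enc t (fst a) (snd a) (layer i)) else None)"
      unfolding obs_sym_def join_state_def using la t_def by (simp add: nth_append)
    show "b = b'" if "b' \<in> B" and "(?C \<circ> join_state) (a, b) = (?C \<circ> join_state) (a', b')"
    proof -
      have "snd a @ fst b # snd b = snd a' @ fst b' # snd b'" using that(2) unfolding join_state_def by simp
      then show ?thesis using la la' by (simp add: prod_eq_iff)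
    qed
    assume E: "layer i \<le> top_layer k (fst b)"
    have "obs_prefix k i (join_state (a, b)) = past_prefix k t i a"
      "obs_prefix k i (join_state (a', b)) = past_prefix k t i a'"
      unfolding join_state_def t_def using obs_prefix_eq_past_prefix la la' E t_def by auto
    then show "((?C \<circ> join_state) (a, b) = (?C \<circ> join_state) (a', b))
        = ((past_prefix k t i a, snd a, msgs_from m a) = (past_prefix k t i a', snd a', msgs_from m a'))"
      unfolding join_state_def msgs_from_def by auto
  qed
  also have "(\<Sum>b\<in>{b\<in>B. layer i \<le> top_layer k (fst b)}. beta b) = layer_prob k (layer i)"
    unfolding B_def beta_def by (rule sum_layer_event)
  finally show ?thesis unfolding sym_entropy_def t_def .
qed

lemma top_layer_Suc_le: "Suc k < K \<Longrightarrow> top_layer (Suc k) N \<le> top_layer k N"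
  unfolding top_layer_def by (rule Max_mono) auto

lemma le_top_layer: "k < K \<Longrightarrow> N (\<pi> k) \<le> top_layer k N"
  unfolding top_layer_def by (rule Max_ge) auto

lemma msgs_from_Suc: "msgs_from (Suc m) om = tl (msgs_from m om)"
  unfolding msgs_from_def by (simp add: map_tl[symmetric] tl_upt)

lemma Outcomes_nonempty: "Outcomes t \<noteq> {}"
proof -
  have "replicate t (\<lambda>_. 0) \<in> Seqs t" unfolding Seqs_def States_def using zero_in_state_set by auto
  then show ?thesis unfolding Outcomes_def using Msgs_nonempty by auto
qed

lemma sym_entropy_mono:
  assumes "\<And>a a'. a \<in> Outcomes (slot i) \<Longrightarrow> a' \<in> Outcomes (slot i) \<Longrightarrow> U1 a = U1 a' \<Longrightarrow> U2 a = U2 a'"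
  shows "sym_entropy k i U1 \<le> sym_entropy k i U2"
proof -
  interpret fin_distr "Outcomes (slot i)" outcome_prob by (rule fin_distr_Outcomes)
  show ?thesis unfolding sym_entropy_def by (rule fin_cond_entropy_mono) (metis assms prod.inject)
qed

lemma sym_entropy_msgs_from_Suc: "sym_entropy k i (msgs_from m) \<le> sym_entropy k i (msgs_from (Suc m))"
  by (rule sym_entropy_mono) (simp add: msgs_from_Suc)

lemma past_prefix_nth: "j < i \<Longrightarrow> past_prefix k t i a ! j = past_sym k t j a"
  unfolding past_prefix_def by simp

(* Receiver k + 1 receives a subset of the layers receiver k receives, so the past observations of
   receiver k determine those of receiver k + 1. *)
lemma sym_entropy_degraded:
  assumes k: "Suc k < K"
  shows "sym_entropy k i U \<le> sym_entropy (Suc k) i U"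
proof -
  interpret fin_distr "Outcomes (slot i)" outcome_prob by (rule fin_distr_Outcomes)
  show ?thesis unfolding sym_entropy_def
  proof (rule fin_cond_entropy_mono)
    fix a a' assume eq: "(past_prefix k (slot i) i a, snd a, U a) = (past_prefix k (slot i) i a', snd a', U a')"
    have "past_prefix (Suc k) (slot i) i a = past_prefix (Suc k) (slot i) i a'"
    proof (rule nth_equalityI)
      show "length (past_prefix (Suc k) (slot i) i a) = length (past_prefix (Suc k) (slot i) i a')" unfolding past_prefix_def by simp
      fix j assume "j < length (past_prefix (Suc k) (slot i) i a)"
      then have ji: "j < i" unfolding past_prefix_def by simp
      have "past_prefix k (slot i) i a = past_prefix k (slot i) i a'" using eq by simp
      then have zk: "past_sym k (slot i) j a = past_sym k (slot i) j a'" using past_prefix_nth[OF ji, of k "slot i"] by metis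
      have sn: "snd a = snd a'" using eq by simp
      show "past_prefix (Suc k) (slot i) i a ! j = past_prefix (Suc k) (slot i) i a' ! j"
        unfolding past_prefix_nth[OF ji]
      proof (cases "slot j < slot i \<and> \<not> layer j \<le> top_layer (Suc k) (snd a ! slot j)")
        case True then show "past_sym (Suc k) (slot i) j a = past_sym (Suc k) (slot i) j a'" unfolding past_sym_def using sn by simp
      next
        case False
        then have "\<not> (slot j < slot i \<and> \<not> layer j \<le> top_layer k (snd a ! slot j))"
          using top_layer_Suc_le[OF k, of "snd a ! slot j"] by auto
        then show "past_sym (Suc k) (slot i) j a = past_sym (Suc k) (slot i) j a'"
          using False zk sn unfolding past_sym_def by (auto split: if_splits)
      qed
    qed
    then show "(past_prefix (Suc k) (slot i) i a, snd a, U a) = (past_prefix (Suc k) (slot i) i a', snd a', U a')"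
      using eq by simp
  qed
qed

lemma sym_entropy_nonneg: "0 \<le> sym_entropy k i U"
proof -
  interpret fin_distr "Outcomes (slot i)" outcome_prob by (rule fin_distr_Outcomes)
  show ?thesis unfolding sym_entropy_def by (rule fin_cond_entropy_nonneg)
qed

lemma sym_entropy_le_ln_card: "sym_entropy k i U \<le> ln CARD('f)"
proof -
  interpret fin_distr "Outcomes (slot i)" outcome_prob by (rule fin_distr_Outcomes)
  let ?f = "\<lambda>a. enc (slot i) (fst a) (snd a) (layer i)"
  have "sym_entropy k i U \<le> fin_entropy (Outcomes (slot i)) outcome_prob ?f" unfolding sym_entropy_def by (rule fin_cond_entropy_le_entropy)
  also have "\<dots> \<le> ln (card (?f ` Outcomes (slot i)))" by (rule fin_entropy_le_ln_card)
  also have "\<dots> \<le> ln CARD('f)"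
  proof -
    have "0 < card (?f ` Outcomes (slot i))" using Outcomes_nonempty finite_A by (simp add: card_gt_0_iff)
    moreover have "card (?f ` Outcomes (slot i)) \<le> CARD('f)" by (rule card_mono) auto
    ultimately show ?thesis by simp
  qed
  finally show ?thesis .
qed

definition obs :: "nat \<Rightarrow> outcome \<Rightarrow> 'f option list" where
  "obs k = obs_prefix k (n * Q)"

definition Info :: "nat \<Rightarrow> real" where
  "Info k = cond_ent (obs k) (\<lambda>om. (snd om, msgs_from (Suc k) om))
     - cond_ent (obs k) (\<lambda>om. (snd om, msgs_from k om))"

lemma cond_entropy_obs:
  "cond_ent (obs k) (\<lambda>om. (snd om, msgs_from m om)) = (\<Sum>i<n * Q. layer_prob k (layer i) * sym_entropy k i (msgs_from m))"
  unfolding obs_def obs_prefix_chain_rule by (intro sum.cong refl) (simp add: cond_entropy_obs_sym)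

lemma Info_eq_sum_sym_entropy:
  "Info k = (\<Sum>i<n * Q. layer_prob k (layer i) *
    (sym_entropy k i (msgs_from (Suc k)) - sym_entropy k i (msgs_from k)))"
  unfolding Info_def cond_entropy_obs by (simp add: sum_subtractf right_diff_distrib)

lemma sum_layer: "(\<Sum>i<m * Q. f (layer i)) = real m * (\<Sum>q=1..Q. f q)" for f :: "nat \<Rightarrow> real"
proof (induction m)
  case 0 then show ?case by simp
next
  case (Suc m)
  have un: "{..<Suc m * Q} = {..<m * Q} \<union> (\<lambda>r. m * Q + r) ` {..<Q}"
  proof (intro set_eqI iffI)
    fix x assume x: "x \<in> {..<Suc m * Q}"
    show "x \<in> {..<m * Q} \<union> (\<lambda>r. m * Q + r) ` {..<Q}"
    proof (cases "x < m * Q")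
      case False
      then have "x = m * Q + (x - m * Q)" "x - m * Q < Q" using x by auto
      then show ?thesis by blast
    qed simp
  qed auto
  have "(\<Sum>i<Suc m * Q. f (layer i)) = (\<Sum>i<m * Q. f (layer i)) + (\<Sum>i\<in>(\<lambda>r. m * Q + r) ` {..<Q}. f (layer i))"
    unfolding un by (rule sum.union_disjoint) auto
  also have "(\<Sum>i\<in>(\<lambda>r. m * Q + r) ` {..<Q}. f (layer i)) = (\<Sum>r<Q. f (layer (m * Q + r)))"
    by (subst sum.reindex) (auto simp: inj_on_def)
  also have "\<dots> = (\<Sum>r<Q. f (Suc r))"
    by (intro sum.cong refl) (simp add: layer_def)
  also have "\<dots> = (\<Sum>q=1..Q. f q)" by (simp add: sum.atLeast1_atMost_eq)
  finally show ?case using Suc by (simp add: algebra_simps)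
qed

lemma weighted_Info_le:
  assumes \<omega>_nonneg: "\<And>k. k < K \<Longrightarrow> 0 \<le> \<omega> (\<pi> k)"
  shows "(\<Sum>k<K. \<omega> (\<pi> k) * Info k) \<le>
     real n * ln CARD('f) * (\<Sum>q=1..Q. Max ((\<lambda>k. \<omega> (\<pi> k) * layer_prob k q) ` {..<K}))"
proof -
  have "(\<Sum>k<K. \<omega> (\<pi> k) * Info k) =
      (\<Sum>i<n * Q. \<Sum>k<K. (\<omega> (\<pi> k) * layer_prob k (layer i)) *
        (sym_entropy k i (msgs_from (Suc k)) - sym_entropy k i (msgs_from k)))"
    unfolding Info_eq_sum_sym_entropy by (simp add: sum_distrib_left sum.swap[of _ "{..<K}"] mult.assoc)
  also have "\<dots> \<le> (\<Sum>i<n * Q. Max ((\<lambda>k. \<omega> (\<pi> k) * layer_prob k (layer i)) ` {..<K}) * ln CARD('f))"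
  proof (intro sum_mono weighted_telescoping_le)
    fix i k
    show "0 \<le> sym_entropy 0 i (msgs_from 0)" by (rule sym_entropy_nonneg)
    show "sym_entropy k i (msgs_from k) \<le> sym_entropy k i (msgs_from (Suc k))" by (rule sym_entropy_msgs_from_Suc)
    show "sym_entropy k i (msgs_from (Suc k)) \<le> ln CARD('f)" by (rule sym_entropy_le_ln_card)
    assume k: "Suc k < K"
    show "sym_entropy k i (msgs_from (Suc k)) \<le> sym_entropy (Suc k) i (msgs_from (Suc k))" by (rule sym_entropy_degraded[OF k])
  next
    fix i k assume "k < K"
    then show "0 \<le> \<omega> (\<pi> k) * layer_prob k (layer i)" using \<omega>_nonneg by (simp add: layer_prob_def)
  qed (use K_pos in simp)
  also have "\<dots> = real n * (\<Sum>q=1..Q. Max ((\<lambda>k. \<omega> (\<pi> k) * layer_prob k q) ` {..<K}) * ln CARD('f))"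
    by (rule sum_layer)
  also have "\<dots> = real n * ln CARD('f) * (\<Sum>q=1..Q. Max ((\<lambda>k. \<omega> (\<pi> k) * layer_prob k q) ` {..<K}))"
    by (simp add: sum_distrib_right[symmetric])
  finally show ?thesis .
qed

definition msg :: "nat \<Rightarrow> outcome \<Rightarrow> nat" where
  "msg k om = fst om (\<pi> k)"

lemma msgs_from_Cons: "k < K \<Longrightarrow> msgs_from k om = msg k om # msgs_from (Suc k) om"
  unfolding msgs_from_def msg_def by (simp add: upt_conv_Cons)

lemma cond_entropy_msgs_from_step:
  assumes k: "k < K"
  shows "cond_ent (msg k) (\<lambda>om. (snd om, msgs_from (Suc k) om))
    = cond_ent (msgs_from k) snd - cond_ent (msgs_from (Suc k)) snd"
proof -
  interpret fin_distr Omega outcome_prob by (rule fin_distr_Outcomes)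
  have e1: "ent (\<lambda>om. (msgs_from k om, snd om)) = ent (\<lambda>om. (msg k om, snd om, msgs_from (Suc k) om))"
    by (rule fin_entropy_cong) (auto simp: msgs_from_Cons[OF k])
  have e2: "ent (\<lambda>om. (snd om, msgs_from (Suc k) om)) = ent (\<lambda>om. (msgs_from (Suc k) om, snd om))"
    by (rule fin_entropy_cong) auto
  show ?thesis unfolding fin_cond_entropy_def e1 e2 by simp
qed

lemma cond_entropy_msgs_from_K: "cond_ent (msgs_from K) snd = 0"
proof -
  interpret fin_distr Omega outcome_prob by (rule fin_distr_Outcomes)
  show ?thesis by (rule fin_cond_entropy_eq_0) (simp add: msgs_from_def)
qed

lemma msgs_from_0_inj:
  assumes om: "om \<in> Omega" "om' \<in> Omega" and eq: "msgs_from 0 om = msgs_from 0 om'"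
  shows "fst om = fst om'"
proof
  fix k
  show "fst om k = fst om' k"
  proof (cases "k < K")
    case True
    have "k \<in> \<pi> ` {..<K}" using permutes_image[OF perm] True by (simp only: lessThan_iff)
    then obtain j where j: "j < K" "k = \<pi> j" by blast
    have "map (\<lambda>j. fst om (\<pi> j)) [0..<K] = map (\<lambda>j. fst om' (\<pi> j)) [0..<K]" using eq unfolding msgs_from_def .
    then have "\<forall>x\<in>set [0..<K]. fst om (\<pi> x) = fst om' (\<pi> x)" by (simp only: map_eq_conv)
    then show ?thesis using j by simp
  next
    case False
    have "fst om \<in> Msgs" "fst om' \<in> Msgs" using om unfolding Outcomes_def by auto
    then have "fst om \<in> PiE {..<K} (\<lambda>k. {..<M k})" "fst om' \<in> PiE {..<K} (\<lambda>k. {..<M k})"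
      unfolding Msgs_def by auto
    then show ?thesis using PiE_arb[of "fst om" "{..<K}" _ k] PiE_arb[of "fst om'" "{..<K}" _ k] False
      by simp
  qed
qed

lemma fiber_prob_snd:
  assumes "om \<in> Omega"
  shows "fiber_prob Omega outcome_prob snd om = seq_prob (snd om)"
proof -
  have fiber: "{a' \<in> Omega. snd a' = snd om} = (\<lambda>W. (W, snd om)) ` Msgs"
    using assms unfolding Outcomes_def by auto
  have "fiber_prob Omega outcome_prob snd om = (\<Sum>W\<in>Msgs. seq_prob (snd om) / card Msgs)"
    unfolding fiber_prob_def outcome_prob_def fiber by (subst sum.reindex) (auto simp: inj_on_def)
  then show ?thesis using card_Msgs_pos by simp
qed

lemma cond_entropy_msgs_from_0: "cond_ent (msgs_from 0) snd = ln (card Msgs)"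
proof -
  interpret fin_distr Omega outcome_prob by (rule fin_distr_Outcomes)
  have e1: "ent (\<lambda>om. (msgs_from 0 om, snd om)) = ent (\<lambda>om. om)"
    by (rule fin_entropy_cong) (auto simp: prod_eq_iff dest: msgs_from_0_inj)
  have pid: "fiber_prob Omega outcome_prob (\<lambda>om. om) om = outcome_prob om" if "om \<in> Omega" for om
  proof -
    have "{a' \<in> Omega. a' = om} = {om}" using that by auto
    then show ?thesis unfolding fiber_prob_def by simp
  qed
  have "ent (\<lambda>om. om) - ent snd = (\<Sum>om\<in>Omega. outcome_prob om * ln (card Msgs))"
  proof -
    have "ent (\<lambda>om. om) - ent snd = (\<Sum>om\<in>Omega. outcome_prob om * ln (seq_prob (snd om)) - outcome_prob om * ln (outcome_prob om))"
      unfolding fin_entropy_def using pid fiber_prob_snd by (simp add: sum_subtractf)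
    also have "\<dots> = (\<Sum>om\<in>Omega. outcome_prob om * ln (card Msgs))"
    proof (intro sum.cong refl)
      fix om assume om: "om \<in> Omega"
      show "outcome_prob om * ln (seq_prob (snd om)) - outcome_prob om * ln (outcome_prob om) = outcome_prob om * ln (card Msgs)"
      proof (cases "seq_prob (snd om) = 0")
        case True then show ?thesis unfolding outcome_prob_def by simp
      next
        case False
        then have pp: "0 < seq_prob (snd om)" using seq_prob_nonneg[of "snd om"] by simp
        have "ln (outcome_prob om) = ln (seq_prob (snd om)) - ln (card Msgs)" unfolding outcome_prob_def
          using pp card_Msgs_pos by (simp add: ln_divide_pos)
        then show ?thesis by (simp only:) (simp add: algebra_simps)
      qed
    qed
    finally show ?thesis .
  qed
  also have "\<dots> = ln (card Msgs)" using sum_w by (simp add: sum_distrib_right[symmetric])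
  finally show ?thesis unfolding fin_cond_entropy_def e1 .
qed

lemma ln_card_Msgs: "ln (card Msgs) = (\<Sum>k<K. ln (M (\<pi> k)))"
proof -
  have "card Msgs = (\<Prod>k<K. M k)" unfolding Msgs_def by (simp add: card_PiE)
  moreover have "\<And>k. k \<in> {..<K} \<Longrightarrow> real (M k) \<noteq> 0" using M_pos
    by (metis not_one_le_zero of_nat_eq_0_iff)
  ultimately have "ln (card Msgs) = (\<Sum>k<K. ln (M k))"
    using ln_prod[of "{..<K}" "\<lambda>k. real (M k)"] by simp
  also have "\<dots> = (\<Sum>k<K. ln (M (\<pi> k)))"
    using sum.reindex_bij_betw[OF permutes_imp_bij[OF perm], of "\<lambda>k. ln (M k)"] by simp
  finally show ?thesis .
qed

lemma msg_less: "om \<in> Omega \<Longrightarrow> k < K \<Longrightarrow> msg k om < M (\<pi> k)"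
  using permutes_in_image[OF perm, of k]
  by (auto simp: msg_def Outcomes_def Msgs_def mem_Times_iff dest!: PiE_mem[where x="\<pi> k"])

lemma cond_entropy_msg_le: "k < K \<Longrightarrow> cond_ent (msg k) C \<le> ln (M (\<pi> k))"
proof -
  assume k: "k < K"
  interpret fin_distr Omega outcome_prob by (rule fin_distr_Outcomes)
  have "msg k ` Omega \<subseteq> {..<M (\<pi> k)}" using msg_less k by auto
  then have "card (msg k ` Omega) \<le> M (\<pi> k)" using card_mono[of "{..<M (\<pi> k)}"] by fastforce
  moreover have "0 < card (msg k ` Omega)" using Outcomes_nonempty finite_A by (simp add: card_gt_0_iff)
  moreover have "cond_ent (msg k) C \<le> ln (card (msg k ` Omega))"
    using fin_cond_entropy_le_entropy fin_entropy_le_ln_card order_trans by blast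
  ultimately show ?thesis by (smt (verit) ln_le_cancel_iff of_nat_0_less_iff of_nat_mono)
qed

(* Summed over k these terms telescope to H(W | states) = ln (card Msgs), the sum of their upper
   bounds ln (M (\<pi> k)); hence every bound is attained. *)
lemma cond_entropy_msg_eq:
  assumes k: "k < K"
  shows "cond_ent (msg k) (\<lambda>om. (snd om, msgs_from (Suc k) om)) = ln (M (\<pi> k))"
proof (rule ccontr)
  define a where "a j = cond_ent (msg j) (\<lambda>om. (snd om, msgs_from (Suc j) om))" for j
  assume ne: "cond_ent (msg k) (\<lambda>om. (snd om, msgs_from (Suc k) om)) \<noteq> ln (M (\<pi> k))"
  have le: "a j \<le> ln (M (\<pi> j))" if "j \<in> {..<K}" for j unfolding a_def using that cond_entropy_msg_le by simp
  have "a k < ln (M (\<pi> k))" using le[of k] k ne unfolding a_def by simp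
  then have "sum a {..<K} < (\<Sum>j<K. ln (M (\<pi> j)))"
    using k le by (intro sum_strict_mono_ex1) auto
  moreover have "sum a {..<K} = cond_ent (msgs_from 0) snd - cond_ent (msgs_from K) snd"
    unfolding a_def using cond_entropy_msgs_from_step
    by (simp add: sum_lessThan_telescope'[of "\<lambda>j. cond_ent (msgs_from j) snd"])
  ultimately show False using cond_entropy_msgs_from_0 cond_entropy_msgs_from_K ln_card_Msgs by simp
qed

lemma Info_eq_msg:
  assumes k: "k < K"
  shows "Info k = cond_ent (msg k) (\<lambda>om. (snd om, msgs_from (Suc k) om))
       - cond_ent (msg k) (\<lambda>om. (obs k om, snd om, msgs_from (Suc k) om))"
proof -
  interpret fin_distr Omega outcome_prob by (rule fin_distr_Outcomes)
  have e1: "ent (\<lambda>om. (obs k om, snd om, msgs_from k om))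
      = ent (\<lambda>om. (msg k om, obs k om, snd om, msgs_from (Suc k) om))"
    by (rule fin_entropy_cong) (auto simp: msgs_from_Cons[OF k])
  have e2: "ent (\<lambda>om. (snd om, msgs_from k om)) = ent (\<lambda>om. (msg k om, snd om, msgs_from (Suc k) om))"
    by (rule fin_entropy_cong) (auto simp: msgs_from_Cons[OF k])
  show ?thesis unfolding Info_def fin_cond_entropy_def e1 e2 by simp
qed

lemma obs_nth: "i < n * Q \<Longrightarrow> obs k om ! i = obs_sym k i om"
  unfolding obs_def obs_prefix_def by simp

lemma user_outputs_determined:
  assumes om: "om \<in> Omega" and k: "k < K" and eqO: "obs k om = obs k om'" and eqS: "snd om = snd om'"
  shows "user_outputs n enc (fst om) (snd om) (\<pi> k) = user_outputs n enc (fst om') (snd om') (\<pi> k)"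
  unfolding user_outputs_def eqS[symmetric]
proof (rule map_cong[OF refl])
  fix t assume "t \<in> set [0..<n]"
  then have t: "t < n" by simp
  define N where "N = snd om ! t"
  have lenn: "length (snd om) = n" and sset: "set (snd om) \<subseteq> States" using om unfolding Outcomes_def Seqs_def by auto
  have NS: "N \<in> States" using sset t lenn unfolding N_def by (auto simp: set_conv_nth)
  have pik: "\<pi> k < K" using permutes_in_image[OF perm, of k] k by simp
  have NQ: "N (\<pi> k) \<le> Q" using NS pik unfolding States_def state_set_def by auto
  have NM: "N (\<pi> k) \<le> top_layer k N" by (rule le_top_layer[OF k])
  have xeq: "enc t (fst om) (take t (snd om)) q = enc t (fst om') (take t (snd om)) q"
    if q1: "1 \<le> q" and qN: "q \<le> N (\<pi> k)" for q
  proof -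
    define i where "i = t * Q + (q - 1)"
    have qQ: "q - 1 < Q" using q1 qN NQ by simp
    have tti: "slot i = t" unfolding slot_def i_def using qQ by simp
    have m: "(q - 1 + t * Q) mod Q = q - 1" using qQ by simp
    have qqi: "layer i = q" unfolding layer_def i_def using m q1 by (simp add: add.commute)
    have "i < t * Q + Q" unfolding i_def using qQ by simp
    also have "t * Q + Q \<le> n * Q" using t by (metis Suc_leI add.commute mult_Suc mult_le_mono1)
    finally have iQ: "i < n * Q" .
    have z1: "obs_sym k i om = Some (enc t (fst om) (take t (snd om)) q)"
      unfolding obs_sym_def tti qqi using qN NM N_def by simp
    have z2: "obs_sym k i om' = Some (enc t (fst om') (take t (snd om)) q)"
      unfolding obs_sym_def tti qqi using qN NM N_def eqS by simp
    have "obs_sym k i om = obs_sym k i om'" using eqO obs_nth[OF iQ, of k] by metis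
    then show ?thesis using z1 z2 by simp
  qed
  show "lpe_output (enc t (fst om) (take t (snd om))) (snd om ! t) (\<pi> k) =
        lpe_output (enc t (fst om') (take t (snd om))) (snd om ! t) (\<pi> k)"
    unfolding lpe_output_def N_def[symmetric] using xeq by (auto intro!: map_cong)
qed

definition user_error :: "(nat \<Rightarrow> 'f list option list \<Rightarrow> (nat \<Rightarrow> nat) list \<Rightarrow> nat) \<Rightarrow> nat \<Rightarrow> real" where
  "user_error dec k =
     sum outcome_prob {om\<in>Omega. msg k om \<noteq> dec (\<pi> k) (user_outputs n enc (fst om) (snd om) (\<pi> k)) (snd om)}"

lemma Info_fano:
  assumes k: "k < K"
  shows "ln (M (\<pi> k)) - (3 + 2 * user_error dec k * ln (M (\<pi> k))) \<le> Info k"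
proof -
  interpret fin_distr Omega outcome_prob by (rule fin_distr_Outcomes)
  define Wh where "Wh om = dec (\<pi> k) (user_outputs n enc (fst om) (snd om) (\<pi> k)) (snd om)" for om
  have "cond_ent (msg k) (\<lambda>om. (obs k om, snd om, msgs_from (Suc k) om))
      \<le> cond_ent (msg k) Wh"
  proof (rule fin_cond_entropy_mono)
    fix om om' assume om: "om \<in> Omega" "om' \<in> Omega"
      and eq: "(obs k om, snd om, msgs_from (Suc k) om) = (obs k om', snd om', msgs_from (Suc k) om')"
    then show "Wh om = Wh om'" unfolding Wh_def using user_outputs_determined[OF om(1) k] by simp
  qed
  also have "\<dots> \<le> 3 + 2 * user_error dec k * ln (M (\<pi> k))"
    unfolding user_error_def Wh_def using msg_less k by (intro fano_inequality M_pos) auto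
  finally show ?thesis using Info_eq_msg[OF k] cond_entropy_msg_eq[OF k] by linarith
qed

lemma seq_prob_eq_prod: "seq_prob ns = (\<Prod>t<length ns. pmf P (ns ! t))"
  unfolding seq_prob_def by (induction ns) (simp_all add: prod.lessThan_Suc_shift del: prod.lessThan_Suc)

lemma error_prob_eq_sum:
  assumes Msgs: "Msgs = msg_set F K n R"
  shows "error_prob F K Q P n R enc dec = (\<Sum>om\<in>Omega. outcome_prob om *
     (if \<exists>k<K. dec k (user_outputs n enc (fst om) (snd om) k) (snd om) \<noteq> fst om k then 1 else 0))"
proof -
  define err where "err W ns = (if \<exists>k<K. dec k (user_outputs n enc W ns k) ns \<noteq> W k then 1 else 0 :: real)" for W ns
  have "(\<Sum>om\<in>Omega. outcome_prob om * err (fst om) (snd om))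
      = (\<Sum>W\<in>Msgs. \<Sum>ns\<in>Seqs n. seq_prob ns / card Msgs * err W ns)"
    unfolding Outcomes_def outcome_prob_def by (subst sum.cartesian_product) (simp add: case_prod_unfold)
  also have "\<dots> = (1 / card Msgs) * (\<Sum>W\<in>Msgs. \<Sum>ns\<in>Seqs n. (\<Prod>t<n. pmf P (ns ! t)) * err W ns)"
    unfolding sum_distrib_left by (intro sum.cong refl) (auto simp: Seqs_def seq_prob_eq_prod)
  also have "\<dots> = error_prob F K Q P n R enc dec"
    unfolding error_prob_def Msgs Seqs_def States_def err_def ..
  finally show ?thesis unfolding err_def ..
qed

lemma user_error_le_error_prob:
  assumes "Msgs = msg_set F K n R" and k: "k < K"
  shows "user_error dec k \<le> error_prob F K Q P n R enc dec"
proof -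
  interpret fin_distr Omega outcome_prob by (rule fin_distr_Outcomes)
  have "user_error dec k = (\<Sum>om\<in>Omega.
      if msg k om \<noteq> dec (\<pi> k) (user_outputs n enc (fst om) (snd om) (\<pi> k)) (snd om) then outcome_prob om else 0)"
    unfolding user_error_def using finite_A by (simp add: sum.inter_filter)
  also have "\<dots> \<le> error_prob F K Q P n R enc dec"
    unfolding error_prob_eq_sum[OF assms(1)] using w_nonneg permutes_in_image[OF perm, of k] k
    by (intro sum_mono) (auto simp: msg_def)
  finally show ?thesis .
qed

lemma weighted_ln_M_le:
  assumes Msgs: "Msgs = msg_set F K n R" and \<omega>: "\<And>k. k < K \<Longrightarrow> 0 \<le> \<omega> (\<pi> k)"
    and e: "error_prob F K Q P n R enc dec \<le> 1/2"
  shows "(\<Sum>k<K. \<omega> (\<pi> k) * ((1 - 2 * error_prob F K Q P n R enc dec) * ln (M (\<pi> k)) - 3))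
    \<le> real n * ln CARD('f) * (\<Sum>q=1..Q. Max ((\<lambda>k. \<omega> (\<pi> k) * layer_prob k q) ` {..<K}))"
proof -
  have "(\<Sum>k<K. \<omega> (\<pi> k) * ((1 - 2 * error_prob F K Q P n R enc dec) * ln (M (\<pi> k)) - 3))
      \<le> (\<Sum>k<K. \<omega> (\<pi> k) * Info k)"
  proof (intro sum_mono mult_left_mono)
    fix k assume "k \<in> {..<K}"
    then have k: "k < K" by simp
    have "user_error dec k * ln (M (\<pi> k)) \<le> error_prob F K Q P n R enc dec * ln (M (\<pi> k))"
      using user_error_le_error_prob[OF Msgs k] M_pos[of "\<pi> k"] by (intro mult_right_mono) auto
    then show "(1 - 2 * error_prob F K Q P n R enc dec) * ln (M (\<pi> k)) - 3 \<le> Info k"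
      using Info_fano[OF k, of dec] by (simp add: algebra_simps)
    show "0 \<le> \<omega> (\<pi> k)" by (rule \<omega>[OF k])
  qed
  also have "\<dots> \<le> real n * ln CARD('f) * (\<Sum>q=1..Q. Max ((\<lambda>k. \<omega> (\<pi> k) * layer_prob k q) ` {..<K}))"
    by (rule weighted_Info_le) (rule \<omega>)
  finally show ?thesis .
qed

end

lemma error_prob_nonneg: "0 \<le> error_prob F K Q P n R enc dec"
  unfolding error_prob_def by (intro mult_nonneg_nonneg sum_nonneg prod_nonneg) auto

lemma one_le_num_msgs:
  assumes "0 \<le> r"
  shows "1 \<le> num_msgs (F :: 'f::{finite,field} itself) n r"
proof -
  have c: "1 \<le> real CARD('f)" by simp
  have "1 \<le> real CARD('f) powr (real n * r)" using c assms by (intro ge_one_powr_ge_zero) auto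
  then show ?thesis unfolding num_msgs_def by (simp add: le_nat_floor)
qed

lemma two_le_card_field: "2 \<le> CARD('f::{finite,field})"
proof -
  have "card {0::'f, 1} \<le> CARD('f)" by (rule card_mono) auto
  then show ?thesis by simp
qed

lemma ln_num_msgs_ge:
  assumes "0 \<le> r"
  shows "real n * r * ln CARD('f) - ln 2 \<le> ln (num_msgs (F :: 'f::{finite,field} itself) n r)"
proof -
  define x where "x = real CARD('f) powr (real n * r)"
  have c: "1 \<le> real CARD('f)" by simp
  have x1: "1 \<le> x" unfolding x_def using c assms by (intro ge_one_powr_ge_zero) auto
  have nm: "real (num_msgs F n r) = of_int \<lfloor>x\<rfloor>" unfolding num_msgs_def x_def using x1
    by (simp add: x_def)
  have "x / 2 \<le> of_int \<lfloor>x\<rfloor>"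
  proof (cases "x < 2")
    case True
    have "1 \<le> \<lfloor>x\<rfloor>" using x1 by (simp add: le_floor_iff)
    then show ?thesis using True by linarith
  next
    case False
    then show ?thesis using of_int_floor_le[of x] real_of_int_floor_gt_diff_one[of x] by linarith
  qed
  then have "ln (x / 2) \<le> ln (num_msgs F n r)" unfolding nm using x1 by (subst ln_le_cancel_iff) auto
  moreover have "ln (x / 2) = real n * r * ln CARD('f) - ln 2" unfolding x_def using x1 x_def
    by (simp add: ln_divide_pos)
  ultimately show ?thesis by simp
qed

lemma finite_blocklength_converse:
  fixes F :: "'f::{finite,field} itself"
    and enc :: "nat \<Rightarrow> (nat \<Rightarrow> nat) \<Rightarrow> (nat \<Rightarrow> nat) list \<Rightarrow> (nat \<Rightarrow> 'f)"
  assumes K: "1 \<le> K" and Q: "1 \<le> Q" and supp: "set_pmf P \<subseteq> state_set K Q"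
    and perm: "\<pi> permutes {..<K}" and R_nonneg: "\<forall>k<K. 0 \<le> R k" and \<omega>_nonneg: "\<forall>k<K. 0 \<le> \<omega> k"
    and n: "1 \<le> n" and e_le: "error_prob F K Q P n R enc dec \<le> 1/2"
  shows "(1 - 2 * error_prob F K Q P n R enc dec) * (\<Sum>k<K. \<omega> k * R k)
      - (ln 2 + 3) * (\<Sum>k<K. \<omega> k) / (real n * ln CARD('f))
    \<le> (\<Sum>q=1..Q. Max ((\<lambda>k. \<omega> (\<pi> k) *
        measure_pmf.prob P {N. Max ((\<lambda>j. N (\<pi> j)) ` {k..<K}) \<ge> q}) ` {..<K}))"
    (is "(1 - 2 * ?e) * ?S - ?c * ?W / (real n * ?L) \<le> ?RHS")
proof -
  define M where "M k = (if k < K then num_msgs F n (R k) else 1)" for k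
  interpret lpe_code K Q P \<pi> M n enc
    by unfold_locales (use K Q supp perm R_nonneg one_le_num_msgs[where F=F] in \<open>auto simp: M_def\<close>)
  have Msgs: "Msgs = msg_set F K n R" unfolding Msgs_def msg_set_def M_def by (intro PiE_cong) auto
  have e: "0 \<le> 1 - 2 * ?e" "1 - 2 * ?e \<le> 1" using e_le error_prob_nonneg[of F K Q P n R enc dec] by auto
  have term_le: "\<omega> k * ((1 - 2 * ?e) * (real n * ?L) * R k - ?c) \<le> \<omega> k * ((1 - 2 * ?e) * ln (M k) - 3)"
    if k: "k < K" for k
  proof -
    have "(1 - 2 * ?e) * (real n * R k * ?L - ln 2) \<le> (1 - 2 * ?e) * ln (M k)"
      using ln_num_msgs_ge[of "R k" n F] R_nonneg k e by (intro mult_left_mono) (auto simp: M_def)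
    moreover have "(1 - 2 * ?e) * ln 2 \<le> ln 2" using e by (simp add: mult_left_le_one_le)
    ultimately show ?thesis using \<omega>_nonneg k by (intro mult_left_mono) (auto simp: algebra_simps)
  qed
  have "(1 - 2 * ?e) * (real n * ?L) * ?S - ?c * ?W = (\<Sum>k<K. \<omega> k * ((1 - 2 * ?e) * (real n * ?L) * R k - ?c))"
    unfolding right_diff_distrib sum_subtractf sum_distrib_left by (simp add: ac_simps)
  also have "\<dots> \<le> (\<Sum>k<K. \<omega> k * ((1 - 2 * ?e) * ln (M k) - 3))" using term_le by (intro sum_mono) auto
  also have "\<dots> = (\<Sum>k<K. \<omega> (\<pi> k) * ((1 - 2 * ?e) * ln (M (\<pi> k)) - 3))"
    by (rule sum.reindex_bij_betw[OF permutes_imp_bij[OF perm], symmetric])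
  also have "\<dots> \<le> real n * ?L * ?RHS"
    using weighted_ln_M_le[OF Msgs _ e_le] \<omega>_nonneg permutes_in_image[OF perm]
    unfolding layer_prob_def top_layer_def by simp
  finally have main: "(1 - 2 * ?e) * (real n * ?L) * ?S - ?c * ?W \<le> real n * ?L * ?RHS" .
  have pos: "0 < real n * ?L" using n two_le_card_field[where 'f='f] by simp
  have "a * S - c / d \<le> r" if "0 < d" "a * d * S - c \<le> d * r" for a d S c r :: real
    using that by (simp add: field_simps)
  from this[OF pos main] show ?thesis .
qed

theorem theorem1:
  fixes F :: "'f::{finite,field} itself"
    and K Q :: nat and P :: "(nat \<Rightarrow> nat) pmf"
    and R \<omega> :: "nat \<Rightarrow> real" and \<pi> :: "nat \<Rightarrow> nat"
  assumes "K \<ge> 2" and "Q \<ge> 1"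
    and "set_pmf P \<subseteq> state_set K Q"
    and "achievable F K Q P R"
    and "\<forall>k<K. 0 \<le> \<omega> k"
    and "\<pi> permutes {..<K}"
  shows "(\<Sum>k<K. \<omega> k * R k) \<le>
    (\<Sum>q=1..Q. Max ((\<lambda>k. \<omega> (\<pi> k) *
        measure_pmf.prob P {N. Max ((\<lambda>j. N (\<pi> j)) ` {k..<K}) \<ge> q}) ` {..<K}))"
proof -
  obtain enc dec where R_nonneg: "\<forall>k<K. 0 \<le> R k"
    and lim: "(\<lambda>n. error_prob F K Q P n R (enc n) (dec n)) \<longlonglongrightarrow> 0"
    using assms(4) unfolding achievable_def by blast
  define e where "e n = error_prob F K Q P n R (enc n) (dec n)" for n
  define c where "c = (ln 2 + 3) * (\<Sum>k<K. \<omega> k) / ln CARD('f)"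
  have "\<forall>\<^sub>F n in sequentially. e n \<le> 1/2 \<and> 1 \<le> n"
    using eventually_conj[OF order_tendstoD(2)[OF lim, of "1/2"] eventually_ge_at_top[of 1]]
    unfolding e_def by (rule eventually_mono) auto
  then have "\<forall>\<^sub>F n in sequentially. (1 - 2 * e n) * (\<Sum>k<K. \<omega> k * R k) - c / real n \<le>
    (\<Sum>q=1..Q. Max ((\<lambda>k. \<omega> (\<pi> k) * measure_pmf.prob P {N. Max ((\<lambda>j. N (\<pi> j)) ` {k..<K}) \<ge> q}) ` {..<K}))"
    (is "\<forall>\<^sub>F n in sequentially. ?lhs n \<le> ?RHS")
  proof (rule eventually_mono)
    fix n assume "e n \<le> 1/2 \<and> 1 \<le> n"
    then show "(1 - 2 * e n) * (\<Sum>k<K. \<omega> k * R k) - c / real n \<le> ?RHS"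
      using finite_blocklength_converse[where F=F and enc="enc n" and dec="dec n"] assms R_nonneg
      by (simp add: e_def c_def mult.commute)
  qed
  moreover have "(\<lambda>n. (1 - 2 * e n) * (\<Sum>k<K. \<omega> k * R k) - c / real n) \<longlonglongrightarrow> (1 - 2 * 0) * (\<Sum>k<K. \<omega> k * R k) - 0"
    using lim unfolding e_def by (intro tendsto_intros lim_const_over_n)
  ultimately show ?thesis by (simp add: tendsto_upperbound)
qed

end
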